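(* Let $k$ be a field, let $V_\bullet$ be a complex of finite dimensional $k$-vector spaces, indexed cohomologically (differential $d_i:V_i\to V_{i+1}$, $i\in\mathbb{Z}$), and let $\phi_\bullet:V_\bullet\to V_\bullet$ be a chain map, with induced maps $\phi_i^H$ on $H^i(V_\bullet)$. Call a finite interval $S=[M,N]\subset\mathbb{Z}$ a stretch if it is maximal (among finite intervals) with respect to the property that $d_i\neq 0$ whenever $i,i+1\in S$. For a stretch $S$ put $\operatorname{tr}_S(\phi_\bullet)=\sum_{i\in S}(-1)^i\operatorname{tr}(\phi_i)$ and $\operatorname{tr}^H_S(\phi_\bullet)=\sum_{i\in S}(-1)^i\operatorname{tr}(\phi_i^H)$. Then the following are equivalent: (a) $\phi_\bullet$ is chain homotopic to a pointwise commutator, i.e. to a chain map $\psi_\bullet$ such that each $\psi_i$ is a commutator in the endomorphism ring of the vector space $V_i$; (b) $\operatorname{tr}_S(\phi_\bullet)=0$ for every stretch $S$; (c) $\operatorname{tr}^H_S(\phi_\bullet)=0$ for every stretch $S$.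
   Context: $\operatorname{tr}$ denotes the trace of an endomorphism of a finite dimensional vector space. A complex may have no stretches, in which case (b) and (c) hold vacuously. *)

theory Defs
  imports "Jordan_Normal_Form.Matrix"
begin

text \<open>A finite dimensional k-vector space V_i is represented as k^(n i);
  linear maps are matrices (Jordan_Normal_Form.Matrix).\<close>

definition mat_trace :: "'k::comm_ring_1 mat \<Rightarrow> 'k" where
  "mat_trace A = (\<Sum>i<dim_row A. A $$ (i, i))"

definition is_complex :: "(int \<Rightarrow> nat) \<Rightarrow> (int \<Rightarrow> 'k::field mat) \<Rightarrow> bool" where
  "is_complex n d \<longleftrightarrow>
     (\<forall>i. d i \<in> carrier_mat (n (i + 1)) (n i)) \<and>
     (\<forall>i. d (i + 1) * d i = 0\<^sub>m (n (i + 2)) (n i))"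

definition is_chain_map :: "(int \<Rightarrow> nat) \<Rightarrow> (int \<Rightarrow> 'k::field mat) \<Rightarrow> (int \<Rightarrow> 'k mat) \<Rightarrow> bool" where
  "is_chain_map n d f \<longleftrightarrow>
     (\<forall>i. f i \<in> carrier_mat (n i) (n i)) \<and>
     (\<forall>i. f (i + 1) * d i = d i * f i)"

definition chain_homotopic :: "(int \<Rightarrow> nat) \<Rightarrow> (int \<Rightarrow> 'k::field mat) \<Rightarrow> (int \<Rightarrow> 'k mat) \<Rightarrow> (int \<Rightarrow> 'k mat) \<Rightarrow> bool" where
  "chain_homotopic n d f g \<longleftrightarrow>
     (\<exists>h. (\<forall>i. h i \<in> carrier_mat (n (i - 1)) (n i)) \<and>
          (\<forall>i. f i - g i = d (i - 1) * h i + h (i + 1) * d i))"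

definition is_commutator :: "nat \<Rightarrow> 'k::field mat \<Rightarrow> bool" where
  "is_commutator m A \<longleftrightarrow>
     (\<exists>B C. B \<in> carrier_mat m m \<and> C \<in> carrier_mat m m \<and> A = B * C - C * B)"

definition pointwise_commutator :: "(int \<Rightarrow> nat) \<Rightarrow> (int \<Rightarrow> 'k::field mat) \<Rightarrow> bool" where
  "pointwise_commutator n g \<longleftrightarrow> (\<forall>i. is_commutator (n i) (g i))"

definition nonzero_on :: "(int \<Rightarrow> nat) \<Rightarrow> (int \<Rightarrow> 'k::field mat) \<Rightarrow> int set \<Rightarrow> bool" where
  "nonzero_on n d S \<longleftrightarrow> (\<forall>i. i \<in> S \<and> i + 1 \<in> S \<longrightarrow> d i \<noteq> 0\<^sub>m (n (i + 1)) (n i))"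

definition is_stretch :: "(int \<Rightarrow> nat) \<Rightarrow> (int \<Rightarrow> 'k::field mat) \<Rightarrow> int \<Rightarrow> int \<Rightarrow> bool" where
  "is_stretch n d M N \<longleftrightarrow>
     M \<le> N \<and> nonzero_on n d {M..N} \<and>
     (\<forall>M' N'. M' \<le> N' \<and> {M..N} \<subseteq> {M'..N'} \<and> nonzero_on n d {M'..N'} \<longrightarrow> {M'..N'} = {M..N})"

definition cocycles :: "(int \<Rightarrow> nat) \<Rightarrow> (int \<Rightarrow> 'k::field mat) \<Rightarrow> int \<Rightarrow> 'k vec set" where
  "cocycles n d i = {v \<in> carrier_vec (n i). d i *\<^sub>v v = 0\<^sub>v (n (i + 1))}"

definition coboundaries :: "(int \<Rightarrow> nat) \<Rightarrow> (int \<Rightarrow> 'k::field mat) \<Rightarrow> int \<Rightarrow> 'k vec set" where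
  "coboundaries n d i = {d (i - 1) *\<^sub>v w | w. w \<in> carrier_vec (n (i - 1))}"

text \<open>Trace of the endomorphism of the quotient W/U (U \<subseteq> W \<subseteq> k^m subspaces, A W \<subseteq> W,
  A U \<subseteq> U) induced by the m\<times>m matrix A: the columns of B (an m\<times>r matrix) project to a basis
  of W/U, C is the matrix of the induced map in that basis, and the value is tr C.\<close>
definition quot_trace :: "nat \<Rightarrow> 'k::field mat \<Rightarrow> 'k vec set \<Rightarrow> 'k vec set \<Rightarrow> 'k" where
  "quot_trace m A W U = (THE t. \<exists>r B C.
      B \<in> carrier_mat m r \<and> C \<in> carrier_mat r r \<and>
      (\<forall>a \<in> carrier_vec r. B *\<^sub>v a \<in> W) \<and>
      (\<forall>w \<in> W. \<exists>a \<in> carrier_vec r. w - B *\<^sub>v a \<in> U) \<and>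
      (\<forall>a \<in> carrier_vec r. B *\<^sub>v a \<in> U \<longrightarrow> a = 0\<^sub>v r) \<and>
      (\<forall>a \<in> carrier_vec r. A *\<^sub>v (B *\<^sub>v a) - B *\<^sub>v (C *\<^sub>v a) \<in> U) \<and>
      t = mat_trace C)"

definition homology_trace :: "(int \<Rightarrow> nat) \<Rightarrow> (int \<Rightarrow> 'k::field mat) \<Rightarrow> (int \<Rightarrow> 'k mat) \<Rightarrow> int \<Rightarrow> 'k" where
  "homology_trace n d f i = quot_trace (n i) (f i) (cocycles n d i) (coboundaries n d i)"

end

theory Submission
  imports Defs "Jordan_Normal_Form.Determinant"
begin

text \<open>
  The trace of a commutator vanishes, and a null-homotopy d h + h d changes the alternating trace
  sum over a stretch [M,N] only by the boundary terms tr(h_M d_(M-1)) and tr(h_(N+1) d_N), which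
  vanish because d_(M-1) = 0 = d_N; hence (a) implies (b). Conversely, under (b) the alternating
  traces have an antiderivative that is constant on the degrees where d vanishes, and this lets one
  choose h with tr(\<phi>_i - d h - h d) = 0 in every degree. Over any field a traceless matrix is a
  commutator: in a Krylov-type basis it becomes upper Hessenberg with subdiagonal sum 0 or 1, and
  then it is a commutator with (an extension of) the shift matrix. This gives (a). Finally the flag
  0 \<subseteq> B^i \<subseteq> Z^i \<subseteq> V_i and V_i/Z^i \<cong> B^(i+1) give
  tr \<phi>_i = tr \<phi>^H_i + tr(\<phi>|B^i) + tr(\<phi>|B^(i+1)), and the coboundary terms telescope
  over a stretch, at whose ends B vanishes; so (b) and (c) are equivalent.
\<close>

lemma mult_mat_vec_zero [simp]:
  "A \<in> carrier_mat nr nc \<Longrightarrow> A *\<^sub>v 0\<^sub>v nc = (0\<^sub>v nr :: 'a::comm_ring_1 vec)"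
  by (intro eq_vecI) auto

lemma zero_mat_mult_vec [simp]:
  "w \<in> carrier_vec nc \<Longrightarrow> 0\<^sub>m nr nc *\<^sub>v w = (0\<^sub>v nr :: 'a::comm_ring_1 vec)"
  by (intro eq_vecI) auto

lemma mult_mat_unit_vec:
  fixes P :: "'a::comm_ring_1 mat"
  assumes P: "P \<in> carrier_mat n m" and k: "k < m"
  shows "P *\<^sub>v unit_vec m k = col P k"
proof (rule eq_vecI)
  fix i assume "i < dim_vec (col P k)" hence i: "i < n" using P by simp
  have "(P *\<^sub>v unit_vec m k) $ i = (\<Sum>l\<in>{0..<m}. P $$ (i, l) * (if l = k then 1 else 0))"
    using P i by (simp add: scalar_prod_def unit_vec_def)
  also have "\<dots> = (\<Sum>l\<in>{0..<m}. if l = k then P $$ (i, l) else 0)" by (rule sum.cong) auto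
  also have "\<dots> = P $$ (i,k)" using k by (simp add: sum.delta')
  finally show "(P *\<^sub>v unit_vec m k) $ i = col P k $ i" using i k P by simp
qed (use P in simp)

lemma eq_mat_by_mult_vec:
  fixes C D :: "'a::comm_ring_1 mat"
  assumes C: "C \<in> carrier_mat r c" and D: "D \<in> carrier_mat r c"
    and eq: "\<And>a. a \<in> carrier_vec c \<Longrightarrow> C *\<^sub>v a = D *\<^sub>v a"
  shows "C = D"
proof (rule eq_matI)
  fix i j assume i: "i < dim_row D" and j: "j < dim_col D"
  have "col C j = col D j"
    using eq[of "unit_vec c j"] mult_mat_unit_vec[OF C] mult_mat_unit_vec[OF D] j D by simp
  thus "C $$ (i,j) = D $$ (i,j)" using i j C D by (metis carrier_matD col_def index_vec)
qed (use C D in auto)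

lemma minus_four_block_mat:
  assumes "A1 \<in> carrier_mat nr1 nc1" "B1 \<in> carrier_mat nr1 nc2"
    "C1 \<in> carrier_mat nr2 nc1" "D1 \<in> carrier_mat nr2 nc2"
    and "A2 \<in> carrier_mat nr1 nc1" "B2 \<in> carrier_mat nr1 nc2"
    "C2 \<in> carrier_mat nr2 nc1" "D2 \<in> carrier_mat nr2 nc2"
  shows "four_block_mat A1 B1 C1 D1 - four_block_mat A2 B2 C2 D2
    = four_block_mat (A1 - A2) (B1 - B2) (C1 - C2) (D1 - D2)"
  by (rule eq_matI, insert assms, auto)

lemma injective_mat_dim_le:
  fixes B :: "'a::field mat"
  assumes B: "B \<in> carrier_mat m r"
    and inj: "\<forall>a\<in>carrier_vec r. B *\<^sub>v a = 0\<^sub>v m \<longrightarrow> a = 0\<^sub>v r"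
  shows "r \<le> m"
proof (rule ccontr)
  assume "\<not> r \<le> m" hence mr: "m < r" by simp
  \<comment> \<open>Pad B with zero rows to a square matrix; its last row vanishes, so it has a kernel.\<close>
  define B' where "B' = mat r r (\<lambda>(i,j). if i < m then B $$ (i,j) else (0::'a))"
  have B'c: "B' \<in> carrier_mat r r" by (simp add: B'_def)
  have "B' = mat\<^sub>r r r (\<lambda>i. if i = r - 1 then 0\<^sub>v r else row B' i)"
    by (rule eq_matI) (use mr in \<open>auto simp: B'_def\<close>)
  hence "det B' = 0" using det_row_0[of "r - 1" r "\<lambda>i. row B' i"] mr B'c by auto
  then obtain v where v: "v \<in> carrier_vec r" "v \<noteq> 0\<^sub>v r" "B' *\<^sub>v v = 0\<^sub>v r"
    using det_0_iff_vec_prod_zero_field[OF B'c] by auto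
  have "B *\<^sub>v v = 0\<^sub>v m"
  proof (rule eq_vecI)
    fix i assume "i < dim_vec (0\<^sub>v m :: 'a vec)" hence i: "i < m" by simp
    have "row B i = row B' i" using i mr B by (auto simp: B'_def)
    hence "(B *\<^sub>v v) $ i = (B' *\<^sub>v v) $ i" using i mr B by (simp add: B'_def)
    thus "(B *\<^sub>v v) $ i = 0\<^sub>v m $ i" using v(3) i mr by simp
  qed (use B in simp)
  thus False using inj v by auto
qed

lemma injective_square_mat_invertible:
  fixes A :: "'a::field mat"
  assumes A: "A \<in> carrier_mat n n"
    and inj: "\<forall>a\<in>carrier_vec n. A *\<^sub>v a = 0\<^sub>v n \<longrightarrow> a = 0\<^sub>v n"
  obtains Q where "Q \<in> carrier_mat n n" "Q * A = 1\<^sub>m n" "A * Q = 1\<^sub>m n"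
proof -
  have "det A \<noteq> 0" using det_0_iff_vec_prod_zero_field[OF A] inj by auto
  from det_non_zero_imp_unit[OF A this, of "()"] show ?thesis
    using that unfolding Units_def ring_mat_def by auto
qed

section \<open>Traces\<close>

lemma mat_trace_add:
  "A \<in> carrier_mat m m \<Longrightarrow> B \<in> carrier_mat m m \<Longrightarrow> mat_trace (A + B) = mat_trace A + mat_trace B"
  by (simp add: mat_trace_def sum.distrib)

lemma mat_trace_minus:
  "A \<in> carrier_mat m m \<Longrightarrow> B \<in> carrier_mat m m \<Longrightarrow> mat_trace (A - B) = mat_trace A - mat_trace B"
  by (simp add: mat_trace_def sum_subtractf)

lemma mat_trace_zero [simp]: "mat_trace (0\<^sub>m m m :: 'a::comm_ring_1 mat) = 0"
  by (simp add: mat_trace_def)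

lemma mat_trace_mult_comm:
  fixes A :: "'a::comm_ring_1 mat"
  assumes A: "A \<in> carrier_mat n m" and B: "B \<in> carrier_mat m n"
  shows "mat_trace (A * B) = mat_trace (B * A)"
proof -
  have "mat_trace (A * B) = (\<Sum>i<n. \<Sum>k<m. A $$ (i,k) * B $$ (k,i))"
    using A B by (simp add: mat_trace_def scalar_prod_def atLeast0LessThan)
  also have "\<dots> = (\<Sum>k<m. \<Sum>i<n. B $$ (k,i) * A $$ (i,k))"
    by (subst sum.swap) (simp add: mult.commute)
  also have "\<dots> = mat_trace (B * A)"
    using A B by (simp add: mat_trace_def scalar_prod_def atLeast0LessThan)
  finally show ?thesis .
qed

lemma mat_trace_similar:
  fixes A :: "'a::comm_ring_1 mat"
  assumes A: "A \<in> carrier_mat n n" and P: "P \<in> carrier_mat n n" and Q: "Q \<in> carrier_mat n n"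
    and PQ: "P * Q = 1\<^sub>m n"
  shows "mat_trace (Q * A * P) = mat_trace A"
proof -
  have "mat_trace (Q * A * P) = mat_trace (P * (Q * A))"
    by (rule mat_trace_mult_comm[of _ n n]) (use A P Q in auto)
  also have "P * (Q * A) = (P * Q) * A" using A P Q by simp
  finally show ?thesis using PQ A by simp
qed

lemma is_commutator_mat_trace:
  fixes A :: "'a::field mat"
  assumes "is_commutator m A"
  shows "mat_trace A = 0"
proof -
  obtain B C where B: "B \<in> carrier_mat m m" and C: "C \<in> carrier_mat m m" and A: "A = B * C - C * B"
    using assms unfolding is_commutator_def by blast
  show ?thesis
    unfolding A using mat_trace_minus[of "B * C" m "C * B"] mat_trace_mult_comm[OF B C] B C by simp
qed

lemma is_commutator_similar:
  fixes A P Q :: "'a::field mat"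
  assumes A: "A \<in> carrier_mat n n" and P: "P \<in> carrier_mat n n" and Q: "Q \<in> carrier_mat n n"
    and QP: "Q * P = 1\<^sub>m n" and PQ: "P * Q = 1\<^sub>m n"
    and comm: "is_commutator n (Q * A * P)"
  shows "is_commutator n A"
proof -
  obtain X Y where X: "X \<in> carrier_mat n n" and Y: "Y \<in> carrier_mat n n"
    and XY: "Q * A * P = X * Y - Y * X"
    using comm unfolding is_commutator_def by blast
  have conj: "(P * U * Q) * (P * V * Q) = P * (U * V) * Q"
    if U: "U \<in> carrier_mat n n" and V: "V \<in> carrier_mat n n" for U V
  proof -
    have "(P * U * Q) * (P * V * Q) = P * U * (Q * P) * V * Q"
      using P Q U V by (simp add: assoc_mult_mat[of _ n n _ n _ n])
    thus ?thesis using QP P Q U V by (simp add: assoc_mult_mat[of _ n n _ n _ n])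
  qed
  have "A = (P * Q) * A * (P * Q)" using PQ A by simp
  also have "\<dots> = P * (X * Y - Y * X) * Q"
    unfolding XY[symmetric] using P Q A by (simp add: assoc_mult_mat[of _ n n _ n _ n])
  also have "\<dots> = (P * (X * Y) - P * (Y * X)) * Q"
    using P X Y by (subst mult_minus_distrib_mat[of _ n n]) auto
  also have "\<dots> = P * (X * Y) * Q - P * (Y * X) * Q"
    using P Q X Y by (subst minus_mult_distrib_mat[of _ n n]) auto
  also have "\<dots> = (P * X * Q) * (P * Y * Q) - (P * Y * Q) * (P * X * Q)"
    using conj[OF X Y] conj[OF Y X] by simp
  finally show ?thesis
    unfolding is_commutator_def using P Q X Y
    by (intro exI[of _ "P * X * Q"] exI[of _ "P * Y * Q"]) auto
qed

section \<open>Traceless matrices are commutators\<close>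

definition int_entry :: "nat \<Rightarrow> 'a::zero mat \<Rightarrow> int \<Rightarrow> int \<Rightarrow> 'a" where
  "int_entry n A i j = (if 0 \<le> i \<and> i < int n \<and> 0 \<le> j \<and> j < int n then A $$ (nat i, nat j) else 0)"

text \<open>The sum along the c-th diagonal; c = 0 is the main diagonal, c < 0 lies below it.\<close>

definition diag_sum :: "nat \<Rightarrow> 'a::comm_ring_1 mat \<Rightarrow> int \<Rightarrow> 'a" where
  "diag_sum n A c = (\<Sum>t<n. int_entry n A (int t) (int t + c))"

definition shift_mat :: "nat \<Rightarrow> 'a::comm_ring_1 mat" where
  "shift_mat n = mat n n (\<lambda>(i,j). if j = Suc i then 1 else 0)"

definition diag_tail_sum :: "nat \<Rightarrow> 'a::comm_ring_1 mat \<Rightarrow> int \<Rightarrow> int \<Rightarrow> 'a" where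
  "diag_tail_sum n A p q = (\<Sum>s\<in>{1..n}. int_entry n A (p - int s) (q - int s + 1))"

definition shift_commutator_partner :: "nat \<Rightarrow> 'a::comm_ring_1 mat \<Rightarrow> 'a mat" where
  "shift_commutator_partner n A = mat n n (\<lambda>(p,q). diag_tail_sum n A (int p) (int q))"

lemma shift_mat_carrier [simp]: "shift_mat n \<in> carrier_mat n n"
  by (simp add: shift_mat_def)

lemma shift_commutator_partner_carrier [simp]: "shift_commutator_partner n A \<in> carrier_mat n n"
  by (simp add: shift_commutator_partner_def)

lemma diag_sum_0: "A \<in> carrier_mat n n \<Longrightarrow> diag_sum n A 0 = mat_trace A"
  by (simp add: diag_sum_def int_entry_def mat_trace_def)

lemma diag_tail_sum_diff:
  assumes "i \<le> int n - 1"
  shows "diag_tail_sum n A (i + 1) j - diag_tail_sum n A i (j - 1) = int_entry n A i j"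
proof -
  let ?f = "\<lambda>s::nat. int_entry n A (i + 1 - int s) (j + 1 - int s)"
  have 1: "diag_tail_sum n A (i + 1) j = (\<Sum>s\<in>{1..n}. ?f s)"
    unfolding diag_tail_sum_def by (rule sum.cong) (auto simp: algebra_simps)
  have 2: "diag_tail_sum n A i (j - 1) = (\<Sum>s\<in>{1..n}. ?f (Suc s))"
    unfolding diag_tail_sum_def by (rule sum.cong) (auto simp: algebra_simps)
  have "(\<Sum>s\<in>{1..n}. ?f (Suc s)) - (\<Sum>s\<in>{1..n}. ?f s) = ?f (Suc n) - ?f 1"
    using sum_Suc_diff[of 1 n ?f] by (simp add: sum_subtractf)
  moreover have "?f (Suc n) = 0" using assms unfolding int_entry_def by auto
  ultimately show ?thesis unfolding 1 2 by (simp add: algebra_simps)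
qed

lemma diag_tail_sum_last_row:
  assumes "diag_sum n A (int j + 1 - int n) = 0" and "j < n"
  shows "diag_tail_sum n A (int n) (int j) = 0"
proof -
  have "diag_tail_sum n A (int n) (int j)
      = (\<Sum>s<n. int_entry n A (int n - int (Suc s)) (int j - int (Suc s) + 1))"
    unfolding diag_tail_sum_def by (rule sum.reindex_bij_witness[of _ Suc "\<lambda>s. s - 1"]) auto
  also have "\<dots> = (\<Sum>t<n. int_entry n A (int (n - Suc t)) (int (n - Suc t) + (int j + 1 - int n)))"
    by (rule sum.cong) (auto simp: of_nat_diff algebra_simps)
  also have "\<dots> = diag_sum n A (int j + 1 - int n)"
    unfolding diag_sum_def by (rule sum.nat_diff_reindex)
  finally show ?thesis using assms(1) by simp
qed

text \<open>Since (S Y - Y S)(p,q) = Y(p+1,q) - Y(p,q-1) for the shift matrix S, a partner Y is obtained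
  by summing A along its diagonals. The only obstruction sits in the last row of S Y, and it is
  exactly a diagonal sum on or below the main diagonal.\<close>

lemma commutator_shift_mat:
  fixes A :: "'a::comm_ring_1 mat"
  assumes A: "A \<in> carrier_mat n n" and diag: "\<forall>c\<le>0. diag_sum n A c = 0"
  shows "A = shift_mat n * shift_commutator_partner n A
    - shift_commutator_partner n A * shift_mat n" (is "A = ?S * ?Y - ?Y * ?S")
proof (rule eq_matI)
  fix i j assume "i < dim_row (?S * ?Y - ?Y * ?S)" and "j < dim_col (?S * ?Y - ?Y * ?S)"
  hence i: "i < n" and j: "j < n" by (auto simp: shift_mat_def shift_commutator_partner_def)
  have left: "(?S * ?Y) $$ (i,j) = diag_tail_sum n A (int i + 1) (int j)"
  proof -
    have "(?S * ?Y) $$ (i,j)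
        = (\<Sum>k<n. (if k = Suc i then 1 else 0) * diag_tail_sum n A (int k) (int j))"
      using i j unfolding shift_mat_def shift_commutator_partner_def
      by (simp add: scalar_prod_def atLeast0LessThan)
    also have "\<dots> = (\<Sum>k<n. if k = Suc i then diag_tail_sum n A (int k) (int j) else 0)"
      by (rule sum.cong) auto
    also have "\<dots> = (if Suc i < n then diag_tail_sum n A (int (Suc i)) (int j) else 0)"
      by (simp add: sum.delta')
    also have "\<dots> = diag_tail_sum n A (int i + 1) (int j)"
    proof (cases "Suc i < n")
      case False
      hence "int i + 1 = int n" using i by simp
      moreover have "diag_sum n A (int j + 1 - int n) = 0" using diag j by simp
      ultimately show ?thesis using diag_tail_sum_last_row[OF _ j] False by simp
    qed (simp add: add.commute)
    finally show ?thesis .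
  qed
  have right: "(?Y * ?S) $$ (i,j) = diag_tail_sum n A (int i) (int j - 1)"
  proof (cases j)
    case 0
    have "diag_tail_sum n A (int i) (-1) = 0"
      unfolding diag_tail_sum_def int_entry_def by (rule sum.neutral) auto
    thus ?thesis using i j 0 unfolding shift_mat_def shift_commutator_partner_def
      by (simp add: scalar_prod_def)
  next
    case (Suc j')
    have "(?Y * ?S) $$ (i,j)
        = (\<Sum>k<n. diag_tail_sum n A (int i) (int k) * (if j = Suc k then 1 else 0))"
      using i j unfolding shift_mat_def shift_commutator_partner_def
      by (simp add: scalar_prod_def atLeast0LessThan)
    also have "\<dots> = (\<Sum>k<n. if k = j' then diag_tail_sum n A (int i) (int k) else 0)"
      by (rule sum.cong) (auto simp: Suc)
    finally show ?thesis using j Suc by (simp add: sum.delta')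
  qed
  have "A $$ (i,j) = int_entry n A (int i) (int j)" using i j by (simp add: int_entry_def)
  also have "\<dots> = diag_tail_sum n A (int i + 1) (int j) - diag_tail_sum n A (int i) (int j - 1)"
    using diag_tail_sum_diff[of "int i" n A "int j"] i by simp
  finally show "A $$ (i,j) = (?S * ?Y - ?Y * ?S) $$ (i,j)"
    using left right i j by (simp add: shift_mat_def shift_commutator_partner_def)
qed (use A in \<open>auto simp: shift_mat_def shift_commutator_partner_def\<close>)

lemma is_commutator_if_diag_sums_vanish:
  fixes A :: "'a::field mat"
  assumes "A \<in> carrier_mat n n" and "\<forall>c\<le>0. diag_sum n A c = 0"
  shows "is_commutator n A"
  using commutator_shift_mat[OF assms] unfolding is_commutator_def by (metis shift_mat_carrier
      shift_commutator_partner_carrier)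

lemma prefix_sums_minus_shift:
  fixes a :: "'a::comm_ring_1 mat"
  assumes a: "a \<in> carrier_mat 1 m" and y: "y = mat 1 m (\<lambda>(_,j). \<Sum>t\<le>j. a $$ (0,t))"
  shows "y - y * shift_mat m = a"
proof (rule eq_matI)
  let ?S = "shift_mat m :: 'a mat"
  have yc: "y \<in> carrier_mat 1 m" and Sc: "?S \<in> carrier_mat m m" using y by auto
  fix i j assume "i < dim_row a" "j < dim_col a"
  hence i: "i = 0" and j: "j < m" using a by auto
  have "(y * ?S) $$ (0,j) = (\<Sum>k<m. y $$ (0,k) * (if j = Suc k then 1 else 0))"
    using j unfolding shift_mat_def y by (simp add: scalar_prod_def atLeast0LessThan)
  also have "\<dots> = (if j = 0 then 0 else y $$ (0, j - 1))"
  proof (cases j)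
    case (Suc j')
    have "(\<Sum>k<m. y $$ (0,k) * (if j = Suc k then 1 else 0))
        = (\<Sum>k<m. if k = j' then y $$ (0,k) else 0)"
      by (rule sum.cong) (auto simp: Suc)
    thus ?thesis using j Suc by (simp add: sum.delta')
  qed simp
  finally have yS: "(y * ?S) $$ (0,j) = (if j = 0 then 0 else y $$ (0, j - 1))" .
  have "(y - y * ?S) $$ (0,j) = y $$ (0,j) - (y * ?S) $$ (0,j)"
    using j carrier_matD[OF yc] carrier_matD[OF Sc] by (intro index_minus_mat(1)) auto
  also have "\<dots> = (\<Sum>t\<le>j. a $$ (0,t)) - (if j = 0 then 0 else \<Sum>t\<le>j-1. a $$ (0,t))"
    unfolding yS using j by (simp add: y)
  also have "\<dots> = a $$ (0,j)" by (cases j) (auto simp: sum.atMost_Suc)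
  finally show "(y - y * ?S) $$ (i,j) = a $$ (i,j)" using i by simp
qed (use a y in \<open>auto simp: shift_mat_def\<close>)

lemma shift_minus_suffix_sums:
  fixes b :: "'a::comm_ring_1 mat"
  assumes b: "b \<in> carrier_mat m 1" and z: "z = mat m 1 (\<lambda>(i,_). - (\<Sum>t\<in>{i..<m}. b $$ (t,0)))"
  shows "shift_mat m * z - z = b"
proof (rule eq_matI)
  let ?S = "shift_mat m :: 'a mat"
  have zc: "z \<in> carrier_mat m 1" and Sc: "?S \<in> carrier_mat m m" using z by auto
  fix i j assume "i < dim_row b" "j < dim_col b"
  hence j: "j = 0" and i: "i < m" using b by auto
  have "(?S * z) $$ (i,0) = (\<Sum>k<m. (if k = Suc i then 1 else 0) * z $$ (k,0))"
    using i unfolding shift_mat_def z by (simp add: scalar_prod_def atLeast0LessThan)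
  also have "\<dots> = (\<Sum>k<m. if k = Suc i then z $$ (k,0) else 0)" by (rule sum.cong) auto
  also have "\<dots> = - (\<Sum>t\<in>{Suc i..<m}. b $$ (t,0))" by (auto simp: sum.delta' z)
  finally have Sz: "(?S * z) $$ (i,0) = - (\<Sum>t\<in>{Suc i..<m}. b $$ (t,0))" .
  have "(?S * z - z) $$ (i,0) = (?S * z) $$ (i,0) - z $$ (i,0)"
    using i carrier_matD[OF zc] carrier_matD[OF Sc] by (intro index_minus_mat(1)) auto
  also have "\<dots> = (\<Sum>t\<in>{i..<m}. b $$ (t,0)) - (\<Sum>t\<in>{Suc i..<m}. b $$ (t,0))"
    unfolding Sz using i by (simp add: z)
  also have "\<dots> = b $$ (i,0)" using i by (simp add: sum.atLeast_Suc_lessThan)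
  finally show "(?S * z - z) $$ (i,j) = b $$ (i,j)" using j by simp
qed (use b z in \<open>auto simp: shift_mat_def\<close>)

lemma commutator_zero_corner:
  fixes A :: "'a::field mat"
  assumes A: "A \<in> carrier_mat (Suc m) (Suc m)" and corner: "A $$ (0,0) = 0"
    and diag: "\<forall>c\<le>0. diag_sum m (mat m m (\<lambda>(i,j). A $$ (Suc i, Suc j))) c = 0"
  shows "is_commutator (Suc m) A"
proof -
  obtain A1 A2 A3 A4 where sb: "split_block A 1 1 = (A1,A2,A3,A4)"
    by (cases "split_block A 1 1") auto
  have c: "A1 \<in> carrier_mat 1 1" "A2 \<in> carrier_mat 1 m" "A3 \<in> carrier_mat m 1"
      "A4 \<in> carrier_mat m m"
    and Aeq: "A = four_block_mat A1 A2 A3 A4" using split_block[OF sb, of m m] A by auto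
  have A1: "A1 = 0\<^sub>m 1 1"
    using sb corner A unfolding split_block_def Let_def by (auto intro!: eq_matI)
  have A4: "A4 = mat m m (\<lambda>(i,j). A $$ (Suc i, Suc j))"
    using sb A unfolding split_block_def Let_def by auto
  define S where "S = (shift_mat m :: 'a mat)"
  define Y4 where "Y4 = shift_commutator_partner m A4"
  have S4: "A4 = S * Y4 - Y4 * S"
    unfolding S_def Y4_def by (rule commutator_shift_mat[OF c(4)]) (use diag A4 in simp)
  \<comment> \<open>The border row and column are absorbed by prefix and suffix sums against the shift.\<close>
  define y where "y = mat 1 m (\<lambda>(_,j). \<Sum>t\<le>j. A2 $$ (0,t))"
  define z where "z = mat m 1 (\<lambda>(i,_). - (\<Sum>t\<in>{i..<m}. A3 $$ (t,0)))"
  have yc: "y \<in> carrier_mat 1 m" and zc: "z \<in> carrier_mat m 1" and Sc: "S \<in> carrier_mat m m"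
    and Y4c: "Y4 \<in> carrier_mat m m" by (auto simp: y_def z_def S_def Y4_def)
  have yS: "y - y * S = A2"
    unfolding S_def by (rule prefix_sums_minus_shift[OF c(2) y_def])
  have Sz: "S * z - z = A3"
    unfolding S_def by (rule shift_minus_suffix_sums[OF c(3) z_def])
  define X where "X = four_block_mat (1\<^sub>m 1) (0\<^sub>m 1 m) (0\<^sub>m m 1) S"
  define Y where "Y = four_block_mat (0\<^sub>m 1 1) y z Y4"
  have XY: "X * Y = four_block_mat (0\<^sub>m 1 1) y (S * z) (S * Y4)"
    unfolding X_def Y_def using yc zc Sc Y4c by (subst mult_four_block_mat[of _ 1 1 _ m _ m], auto)
  have YX: "Y * X = four_block_mat (0\<^sub>m 1 1) (y * S) z (Y4 * S)"
    unfolding X_def Y_def using yc zc Sc Y4c by (subst mult_four_block_mat[of _ 1 1 _ m _ m], auto)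
  have "X * Y - Y * X = four_block_mat (0\<^sub>m 1 1 - 0\<^sub>m 1 1) (y - y * S) (S * z - z) (S * Y4 - Y4 * S)"
    unfolding XY YX using yc zc Sc Y4c by (subst minus_four_block_mat[of _ 1 1 _ m _ m], auto)
  also have "\<dots> = A"
  proof -
    have z0: "0\<^sub>m (Suc 0) (Suc 0) - 0\<^sub>m (Suc 0) (Suc 0) = (0\<^sub>m (Suc 0) (Suc 0) :: 'a mat)"
      by (rule eq_matI) auto
    show ?thesis unfolding Aeq A1 yS Sz S4[symmetric] by (simp only: One_nat_def z0)
  qed
  finally show ?thesis
    unfolding is_commutator_def X_def Y_def using Sc Y4c yc zc
    by (intro exI[of _ X] exI[of _ Y]) (auto simp: X_def Y_def)
qed

definition upper_hessenberg :: "nat \<Rightarrow> 'a::zero mat \<Rightarrow> bool" where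
  "upper_hessenberg n B \<longleftrightarrow> (\<forall>i<n. \<forall>j<n. Suc j < i \<longrightarrow> B $$ (i,j) = 0)"

lemma diag_sum_upper_hessenberg:
  assumes "upper_hessenberg n A" and "c \<le> -2"
  shows "diag_sum n A c = 0"
  unfolding diag_sum_def
proof (rule sum.neutral, intro ballI)
  fix t assume t: "t \<in> {..<n}"
  show "int_entry n A (int t) (int t + c) = 0"
  proof (cases "0 \<le> int t + c")
    case True
    hence "Suc (nat (int t + c)) < t" "nat (int t + c) < n" using assms(2) t by auto
    thus ?thesis using assms(1) t unfolding int_entry_def upper_hessenberg_def by auto
  qed (simp add: int_entry_def)
qed

lemma diag_sum_subdiagonal:
  assumes "A \<in> carrier_mat (Suc m) (Suc m)"
  shows "diag_sum (Suc m) A (-1) = (\<Sum>j<m. A $$ (Suc j, j))"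
proof -
  have "nat (1 + int j) = Suc j" for j by simp
  thus ?thesis unfolding diag_sum_def by (subst sum.lessThan_Suc_shift) (simp add: int_entry_def)
qed

lemma diag_sum_diagonal_mat:
  assumes "c < 0" and "\<forall>i<n. \<forall>j<n. i \<noteq> j \<longrightarrow> A $$ (i,j) = 0"
  shows "diag_sum n A c = 0"
  unfolding diag_sum_def
proof (rule sum.neutral, intro ballI)
  fix t assume t: "t \<in> {..<n}"
  show "int_entry n A (int t) (int t + c) = 0"
  proof (cases "0 \<le> int t + c")
    case True
    hence "nat (int t + c) \<noteq> t" "nat (int t + c) < n" using assms(1) t by auto
    thus ?thesis using assms(2) t unfolding int_entry_def by auto
  qed (simp add: int_entry_def)
qed

lemma nonpos_int_cases:
  assumes "(c::int) \<le> 0"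
  obtains "c = 0" | "c = -1" | "c \<le> -2"
  using assms by linarith

lemma upper_hessenberg_commutator:
  fixes B :: "'a::field mat"
  assumes B: "B \<in> carrier_mat (Suc m) (Suc m)" and hess: "upper_hessenberg (Suc m) B"
    and tr: "mat_trace B = 0" and m: "1 \<le> m" and corner: "B $$ (0,0) = 0"
      and first: "B $$ (1,0) = 1"
    and subdiag: "(\<Sum>j<m. B $$ (Suc j, j)) = 0 \<or> (\<Sum>j<m. B $$ (Suc j, j)) = 1"
  shows "is_commutator (Suc m) B"
  using subdiag
proof
  assume total: "(\<Sum>j<m. B $$ (Suc j, j)) = 0"
  have "diag_sum (Suc m) B c = 0" if "c \<le> 0" for c
    by (rule nonpos_int_cases[OF that]) (use total diag_sum_0[OF B] diag_sum_subdiagonal[OF B]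
        diag_sum_upper_hessenberg[OF hess] tr in auto)
  thus ?thesis using is_commutator_if_diag_sums_vanish[OF B] by blast
next
  \<comment> \<open>Otherwise split off the leading 1 of the subdiagonal; the remaining block has subdiagonal
    sum 0.\<close>
  assume total: "(\<Sum>j<m. B $$ (Suc j, j)) = 1"
  obtain m' where m': "m = Suc m'" using m by (cases m) auto
  define B4 where "B4 = mat m m (\<lambda>(i,j). B $$ (Suc i, Suc j))"
  have B4: "B4 \<in> carrier_mat m m" by (simp add: B4_def)
  have "mat_trace B = B $$ (0,0) + mat_trace B4"
    using B by (simp add: mat_trace_def B4_def sum.lessThan_Suc_shift del: sum.lessThan_Suc)
  hence trace4: "mat_trace B4 = 0" using tr corner by simp
  have subdiag4: "(\<Sum>j<m'. B4 $$ (Suc j, j)) = 0"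
  proof -
    have "(\<Sum>j<m. B $$ (Suc j, j)) = B $$ (1,0) + (\<Sum>j<m'. B4 $$ (Suc j, j))"
      unfolding m' by (subst sum.lessThan_Suc_shift) (simp add: B4_def m')
    thus ?thesis using total first by simp
  qed
  have hess4: "upper_hessenberg m B4" using hess unfolding upper_hessenberg_def B4_def by auto
  have "diag_sum m B4 c = 0" if "c \<le> 0" for c
    by (rule nonpos_int_cases[OF that]) (use trace4 subdiag4 diag_sum_0[OF B4]
        diag_sum_subdiagonal[of B4 m'] B4 diag_sum_upper_hessenberg[OF hess4] m' in auto)
  thus ?thesis using commutator_zero_corner[OF B corner] unfolding B4_def by blast
qed

definition in_col_span :: "nat \<Rightarrow> 'a::comm_ring_1 vec list \<Rightarrow> 'a vec \<Rightarrow> bool" where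
  "in_col_span n es w \<longleftrightarrow> (\<exists>a\<in>carrier_vec (length es). mat_of_cols n es *\<^sub>v a = w)"

definition cols_independent :: "nat \<Rightarrow> 'a::comm_ring_1 vec list \<Rightarrow> bool" where
  "cols_independent n es \<longleftrightarrow>
     (\<forall>a\<in>carrier_vec (length es). mat_of_cols n es *\<^sub>v a = 0\<^sub>v n \<longrightarrow> a = 0\<^sub>v (length es))"

lemma mat_of_cols_snoc_mult_vec:
  fixes es :: "'a::comm_ring_1 vec list"
  assumes w: "w \<in> carrier_vec n" and a: "a \<in> carrier_vec (Suc (length es))"
  shows "mat_of_cols n (es @ [w]) *\<^sub>v a =
     mat_of_cols n es *\<^sub>v vec (length es) (\<lambda>i. a $ i) + a $ (length es) \<cdot>\<^sub>v w"
proof (rule eq_vecI)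
  fix i assume "i < dim_vec (mat_of_cols n es *\<^sub>v vec (length es) (($) a) + a $ length es \<cdot>\<^sub>v w)"
  hence i: "i < n" using w by simp
  have "(mat_of_cols n (es @ [w]) *\<^sub>v a) $ i = (\<Sum>j<length es. es ! j $ i * a $ j)
      + w $ i * a $ length es"
    using i a
    by (simp add: scalar_prod_def mat_of_cols_index atLeast0LessThan mult.commute nth_append)
  also have "(\<Sum>j<length es. es ! j $ i * a $ j)
      = (mat_of_cols n es *\<^sub>v vec (length es) (\<lambda>i. a $ i)) $ i"
    using i by (simp add: scalar_prod_def mat_of_cols_index atLeast0LessThan mult.commute)
  finally show "(mat_of_cols n (es @ [w]) *\<^sub>v a) $ i =
     (mat_of_cols n es *\<^sub>v vec (length es) (\<lambda>i. a $ i) + a $ (length es) \<cdot>\<^sub>v w) $ i"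
    using i w by (simp add: mult.commute)
qed (use w in simp)

lemma cols_independent_snoc:
  fixes es :: "'a::field vec list"
  assumes w: "w \<in> carrier_vec n" and ind: "cols_independent n es" and new: "\<not> in_col_span n es w"
  shows "cols_independent n (es @ [w])"
  unfolding cols_independent_def
proof (intro ballI impI)
  fix a :: "'a vec" assume a: "a \<in> carrier_vec (length (es @ [w]))"
    and z: "mat_of_cols n (es @ [w]) *\<^sub>v a = 0\<^sub>v n"
  let ?k = "length es"
  let ?a' = "vec ?k (\<lambda>i. a $ i)"
  have eq: "mat_of_cols n es *\<^sub>v ?a' + a $ ?k \<cdot>\<^sub>v w = 0\<^sub>v n"
    using z mat_of_cols_snoc_mult_vec[OF w, of a es] a by simp
  have last: "a $ ?k = 0"
  proof (rule ccontr)
    assume nz: "a $ ?k \<noteq> 0"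
    have "mat_of_cols n es *\<^sub>v ((- inverse (a $ ?k)) \<cdot>\<^sub>v ?a') = w"
    proof (rule eq_vecI)
      fix i assume "i < dim_vec w" hence i: "i < n" using w by simp
      have "(mat_of_cols n es *\<^sub>v ?a') $ i + a $ ?k * w $ i = 0"
        using arg_cong[OF eq, of "\<lambda>x. x $ i"] i w by simp
      thus "(mat_of_cols n es *\<^sub>v ((- inverse (a $ ?k)) \<cdot>\<^sub>v ?a')) $ i = w $ i"
        using i nz by (simp add: mult_mat_vec field_simps add_eq_0_iff2)
    qed (use w in simp)
    thus False using new unfolding in_col_span_def by auto
  qed
  have "a $ ?k \<cdot>\<^sub>v w = 0\<^sub>v n" using last w by (intro eq_vecI) auto
  moreover have "mat_of_cols n es *\<^sub>v ?a' \<in> carrier_vec n" by (rule mult_mat_vec_carrier) auto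
  ultimately have "mat_of_cols n es *\<^sub>v ?a' = 0\<^sub>v n" using eq by simp
  hence init: "?a' = 0\<^sub>v ?k" using ind unfolding cols_independent_def by auto
  show "a = 0\<^sub>v (length (es @ [w]))"
  proof (rule eq_vecI)
    fix i assume "i < dim_vec (0\<^sub>v (length (es @ [w])) :: 'a vec)"
    thus "a $ i = 0\<^sub>v (length (es @ [w])) $ i"
      using last arg_cong[OF init, of "\<lambda>x. x $ i"] by (cases "i = ?k") auto
  qed (use a in simp)
qed

lemma exists_not_in_col_span:
  fixes es :: "'a::field vec list"
  assumes len: "length es < n"
  shows "\<exists>w\<in>carrier_vec n. \<not> in_col_span n es w"
proof (rule ccontr)
  let ?k = "length es"
  let ?P = "mat_of_cols n es"
  assume "\<not> ?thesis"
  hence "\<forall>i<n. \<exists>a. a \<in> carrier_vec ?k \<and> ?P *\<^sub>v a = unit_vec n i"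
    unfolding in_col_span_def by auto
  then obtain f where f: "\<And>i. i < n \<Longrightarrow> f i \<in> carrier_vec ?k \<and> ?P *\<^sub>v f i = unit_vec n i"
    by metis
  \<comment> \<open>A right inverse of the n \<times> k matrix P would be injective, forcing n \<le> k.\<close>
  define R where "R = mat ?k n (\<lambda>(i,j). f j $ i)"
  have Rc: "R \<in> carrier_mat ?k n" by (simp add: R_def)
  have PR: "?P * R = 1\<^sub>m n"
  proof (rule eq_matI)
    fix i j assume "i < dim_row (1\<^sub>m n :: 'a mat)" "j < dim_col (1\<^sub>m n :: 'a mat)"
    hence i: "i < n" and j: "j < n" by auto
    have "col R j = f j" using j f[OF j] by (auto simp: R_def)
    hence "(?P * R) $$ (i,j) = (?P *\<^sub>v f j) $ i" using i j Rc by (simp add: col_def)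
    thus "(?P * R) $$ (i,j) = 1\<^sub>m n $$ (i,j)" using i j f[OF j] by (simp add: unit_vec_def)
  qed (use Rc in auto)
  have "\<forall>a\<in>carrier_vec n. R *\<^sub>v a = 0\<^sub>v ?k \<longrightarrow> a = 0\<^sub>v n"
  proof (intro ballI impI)
    fix a :: "'a vec" assume a: "a \<in> carrier_vec n" and z: "R *\<^sub>v a = 0\<^sub>v ?k"
    have "a = (?P * R) *\<^sub>v a" using PR a by simp
    also have "\<dots> = ?P *\<^sub>v (R *\<^sub>v a)" using Rc a by (simp add: assoc_mult_mat_vec[of _ n ?k])
    finally show "a = 0\<^sub>v n" using z by simp
  qed
  from injective_mat_dim_le[OF Rc this] len show False by simp
qed

lemma mult_mat_of_cols_take:
  fixes es :: "'a::comm_ring_1 vec list"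
  assumes j: "j < length es" and a: "a \<in> carrier_vec (Suc j)"
  shows "mat_of_cols n (take (Suc j) es) *\<^sub>v a
    = mat_of_cols n es *\<^sub>v vec (length es) (\<lambda>i. if i \<le> j then a $ i else 0)"
proof (rule eq_vecI)
  fix i assume "i < dim_vec (mat_of_cols n es *\<^sub>v vec (length es) (\<lambda>i. if i \<le> j then a $ i else 0))"
  hence i: "i < n" by simp
  have "(mat_of_cols n (take (Suc j) es) *\<^sub>v a) $ i = (\<Sum>k<Suc j. es ! k $ i * a $ k)"
    using i j a by (simp add: scalar_prod_def mat_of_cols_index atLeast0LessThan min_def)
  also have "\<dots> = (\<Sum>k\<in>{..<length es} \<inter> {k. k < Suc j}. es ! k $ i * a $ k)"
    using j by (intro sum.cong) auto
  also have "\<dots> = (mat_of_cols n es *\<^sub>v vec (length es) (\<lambda>i. if i \<le> j then a $ i else 0)) $ i"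
    using i by (simp add: scalar_prod_def mat_of_cols_index atLeast0LessThan sum.inter_restrict
        less_Suc_eq_le if_distrib cong: if_cong)
  finally show "(mat_of_cols n (take (Suc j) es) *\<^sub>v a) $ i = \<dots>" .
qed simp

lemma basis_change_entry:
  fixes A P Q :: "'a::comm_ring_1 mat"
  assumes A: "A \<in> carrier_mat n n" and P: "P \<in> carrier_mat n n" and Q: "Q \<in> carrier_mat n n"
    and QP: "Q * P = 1\<^sub>m n" and i: "i < n" and j: "j < n"
  shows "(Q * A * P) $$ (i,j) = (Q *\<^sub>v (A *\<^sub>v col P j)) $ i"
    and "Q *\<^sub>v col P j = unit_vec n j"
proof -
  have "(Q * A * P) $$ (i,j) = row (Q * A) i \<bullet> col P j"
    by (rule index_mult_mat(1)) (use i j Q A P in auto)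
  also have "\<dots> = ((Q * A) *\<^sub>v col P j) $ i" using i Q A by simp
  finally show "(Q * A * P) $$ (i,j) = (Q *\<^sub>v (A *\<^sub>v col P j)) $ i"
    using Q A P j by (simp add: assoc_mult_mat_vec[of _ n n _ n])
  have "Q *\<^sub>v col P j = (Q * P) *\<^sub>v unit_vec n j"
    using mult_mat_unit_vec[OF P j] Q P by (simp add: assoc_mult_mat_vec[of _ n n _ n])
  thus "Q *\<^sub>v col P j = unit_vec n j" using QP j by simp
qed

text \<open>In the resulting basis A is upper Hessenberg and
  its subdiagonal consists of zeros and of alternating signs starting with 1, so all its partial
  sums are 0 or 1.\<close>

primrec krylov_chain :: "nat \<Rightarrow> 'a::field mat \<Rightarrow> 'a vec \<Rightarrow> nat \<Rightarrow> 'a vec list \<times> nat" where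
  "krylov_chain n A v 0 = ([v], 0)"
| "krylov_chain n A v (Suc j) =
    (let es = fst (krylov_chain n A v j); c = snd (krylov_chain n A v j);
     u = A *\<^sub>v last es in
     if in_col_span n es u then (es @ [SOME w. w \<in> carrier_vec n \<and> \<not> in_col_span n es w], c)
     else (es @ [(-1)^c \<cdot>\<^sub>v u], Suc c))"

definition krylov_vec :: "nat \<Rightarrow> 'a::field mat \<Rightarrow> 'a vec \<Rightarrow> nat \<Rightarrow> 'a vec" where
  "krylov_vec n A v j = last (fst (krylov_chain n A v j))"

definition krylov_step :: "nat \<Rightarrow> 'a::field mat \<Rightarrow> 'a vec \<Rightarrow> nat \<Rightarrow> bool" where
  "krylov_step n A v j \<longleftrightarrow> \<not> in_col_span n (fst (krylov_chain n A v j)) (A *\<^sub>v krylov_vec n A v j)"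

lemma krylov_chain_fst: "fst (krylov_chain n A v j) = map (krylov_vec n A v) [0..<Suc j]"
proof (induction j)
  case (Suc j)
  have "fst (krylov_chain n A v (Suc j)) = fst (krylov_chain n A v j) @ [krylov_vec n A v (Suc j)]"
    by (simp add: krylov_vec_def Let_def)
  thus ?case using Suc by simp
qed (simp add: krylov_vec_def)

lemma krylov_chain_snd:
  "snd (krylov_chain n A v (Suc j)) = snd (krylov_chain n A v j)
      + (if krylov_step n A v j then 1 else 0)"
  by (simp add: krylov_step_def krylov_vec_def Let_def)

lemma krylov_vec_0 [simp]: "krylov_vec n A v 0 = v"
  by (simp add: krylov_vec_def)

lemma krylov_vec_Suc_step:
  "krylov_step n A v j \<Longrightarrow>
    krylov_vec n A v (Suc j) = (-1)^(snd (krylov_chain n A v j)) \<cdot>\<^sub>v (A *\<^sub>v krylov_vec n A v j)"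
  by (simp add: krylov_step_def krylov_vec_def Let_def)

lemma krylov_vec_Suc_no_step:
  "\<not> krylov_step n A v j \<Longrightarrow> krylov_vec n A v (Suc j) =
    (SOME w. w \<in> carrier_vec n \<and> \<not> in_col_span n (fst (krylov_chain n A v j)) w)"
  by (simp add: krylov_step_def krylov_vec_def Let_def)

lemma krylov_subdiag_sum:
  "(\<Sum>j<k. if krylov_step n A v j then (-1::'a::field)^(snd (krylov_chain n A v j)) else 0) =
     (if even (snd (krylov_chain n A v k)) then 0 else 1)"
  by (induction k) (auto simp: krylov_chain_snd simp del: krylov_chain.simps(2))

lemma neg_one_power_smult_twice:
  "(v :: 'a::comm_ring_1 vec) \<in> carrier_vec n \<Longrightarrow> (-1)^c \<cdot>\<^sub>v ((-1)^c \<cdot>\<^sub>v v) = v"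
  by (rule eq_vecI) (auto simp: power_mult_distrib[symmetric])

lemma krylov_step_image:
  assumes A: "A \<in> carrier_mat n n" and e: "krylov_vec n A v j \<in> carrier_vec n"
    and step: "krylov_step n A v j"
  shows "A *\<^sub>v krylov_vec n A v j = (-1)^(snd (krylov_chain n A v j)) \<cdot>\<^sub>v krylov_vec n A v (Suc j)"
  using krylov_vec_Suc_step[OF step] neg_one_power_smult_twice[of "A *\<^sub>v krylov_vec n A v j" n] A e
  by simp

lemma krylov_chain_independent:
  fixes A :: "'a::field mat"
  assumes A: "A \<in> carrier_mat n n" and v: "v \<in> carrier_vec n"
    and new: "\<not> in_col_span n [v] (A *\<^sub>v v)" and j: "j < n"
  shows "set (fst (krylov_chain n A v j)) \<subseteq> carrier_vec n
      \<and> cols_independent n (fst (krylov_chain n A v j))"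
  using j
proof (induction j)
  case 0
  have "v \<noteq> 0\<^sub>v n"
  proof
    assume "v = 0\<^sub>v n"
    hence "A *\<^sub>v v = mat_of_cols n [v] *\<^sub>v 0\<^sub>v 1"
      using A mult_mat_vec_zero[OF mat_of_cols_carrier(1)[of n "[v]"]] by simp
    thus False using new unfolding in_col_span_def by force
  qed
  have "cols_independent n [v]"
    unfolding cols_independent_def
  proof (intro ballI impI)
    fix a :: "'a vec" assume a: "a \<in> carrier_vec (length [v])"
      and z: "mat_of_cols n [v] *\<^sub>v a = 0\<^sub>v n"
    have "v $ i * a $ 0 = 0" if "i < n" for i
      using arg_cong[OF z, of "\<lambda>x. x $ i"] that a by (simp add: scalar_prod_def mat_of_cols_index)
    hence "a $ 0 = 0"
      using \<open>v \<noteq> 0\<^sub>v n\<close> v by (metis eq_vecI index_zero_vec mult_eq_0_iff carrier_vecD)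
    thus "a = 0\<^sub>v (length [v])" using a by (intro eq_vecI) auto
  qed
  thus ?case using v by simp
next
  case (Suc j)
  let ?es = "fst (krylov_chain n A v j)"
  have IH: "set ?es \<subseteq> carrier_vec n" "cols_independent n ?es" using Suc by auto
  have e: "krylov_vec n A v j \<in> carrier_vec n" using IH(1) unfolding krylov_vec_def
    by (metis krylov_chain_fst last_in_set length_map length_upt list.size(3) nat.distinct(1)
        subsetD diff_zero)
  have fs: "fst (krylov_chain n A v (Suc j)) = ?es @ [krylov_vec n A v (Suc j)]"
    by (simp add: krylov_vec_def Let_def)
  have succ: "krylov_vec n A v (Suc j) \<in> carrier_vec n
      \<and> \<not> in_col_span n ?es (krylov_vec n A v (Suc j))"
  proof (cases "krylov_step n A v j")
    case True
    let ?c = "snd (krylov_chain n A v j)"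
    have "\<not> in_col_span n ?es (krylov_vec n A v (Suc j))"
    proof
      assume "in_col_span n ?es (krylov_vec n A v (Suc j))"
      then obtain a where a: "a \<in> carrier_vec (length ?es)"
        "mat_of_cols n ?es *\<^sub>v a = krylov_vec n A v (Suc j)"
        unfolding in_col_span_def by auto
      have "mat_of_cols n ?es *\<^sub>v ((-1)^?c \<cdot>\<^sub>v a) = A *\<^sub>v krylov_vec n A v j"
        using a krylov_step_image[OF A e True] by (simp add: mult_mat_vec[of _ n "length ?es"])
      hence "in_col_span n ?es (A *\<^sub>v krylov_vec n A v j)" unfolding in_col_span_def
        using a(1) by auto
      thus False using True unfolding krylov_step_def by simp
    qed
    thus ?thesis using krylov_vec_Suc_step[OF True] e A by simp
  next
    case False
    have "\<exists>w. w \<in> carrier_vec n \<and> \<not> in_col_span n ?es w"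
      using exists_not_in_col_span[of ?es n] Suc.prems by (auto simp: krylov_chain_fst)
    thus ?thesis unfolding krylov_vec_Suc_no_step[OF False] by (rule someI_ex)
  qed
  thus ?case using cols_independent_snoc[OF _ IH(2)] IH(1) fs by auto
qed

lemma krylov_normal_form:
  fixes A :: "'a::field mat"
  assumes A: "A \<in> carrier_mat n n" and v: "v \<in> carrier_vec n"
    and new: "\<not> in_col_span n [v] (A *\<^sub>v v)" and n: "1 < n"
  obtains P Q where "P \<in> carrier_mat n n" "Q \<in> carrier_mat n n" "Q * P = 1\<^sub>m n" "P * Q = 1\<^sub>m n"
    "upper_hessenberg n (Q * A * P)" "(Q * A * P) $$ (0,0) = 0" "(Q * A * P) $$ (1,0) = 1"
    "(\<Sum>j<n-1. (Q * A * P) $$ (Suc j, j)) = 0 \<or> (\<Sum>j<n-1. (Q * A * P) $$ (Suc j, j)) = 1"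
proof -
  let ?e = "krylov_vec n A v" and ?c = "\<lambda>j. snd (krylov_chain n A v j)"
  let ?E = "fst (krylov_chain n A v (n - 1))"
  have E: "?E = map ?e [0..<n]" using n by (simp add: krylov_chain_fst)
  have Ec: "set ?E \<subseteq> carrier_vec n" and Eind: "cols_independent n ?E"
    using krylov_chain_independent[OF A v new, of "n - 1"] n by auto
  have ec: "k < n \<Longrightarrow> ?e k \<in> carrier_vec n" for k using Ec E by auto
  define P where "P = mat_of_cols n ?E"
  have lenE: "length ?E = n" using E by simp
  hence Pc: "P \<in> carrier_mat n n" unfolding P_def by (metis mat_of_cols_carrier(1))
  have colP: "k < n \<Longrightarrow> col P k = ?e k" for k unfolding P_def using E ec by simp
  obtain Q where Qc: "Q \<in> carrier_mat n n" and QP: "Q * P = 1\<^sub>m n" and PQ: "P * Q = 1\<^sub>m n"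
    using injective_square_mat_invertible[OF Pc] Eind E unfolding cols_independent_def P_def by auto
  let ?B = "Q * A * P"
  have entry: "?B $$ (i,j) = (Q *\<^sub>v (A *\<^sub>v ?e j)) $ i" if "i < n" "j < n" for i j
    using basis_change_entry(1)[OF A Pc Qc QP that] colP that by simp
  have coord: "Q *\<^sub>v ?e k = unit_vec n k" if "k < n" for k
    using basis_change_entry(2)[OF A Pc Qc QP that that] colP that by simp
  have step: "Q *\<^sub>v (A *\<^sub>v ?e j) = (-1)^(?c j) \<cdot>\<^sub>v unit_vec n (Suc j)"
    if "krylov_step n A v j" "Suc j < n" for j
    using krylov_step_image[OF A ec that(1)] coord[OF that(2)] that Qc ec[of "Suc j"]
    by (simp add: mult_mat_vec[of Q n n])
  have no_step: "\<exists>a. Q *\<^sub>v (A *\<^sub>v ?e j) = vec n (\<lambda>i. if i \<le> j then a $ i else 0)"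
    if no_step: "\<not> krylov_step n A v j" and j: "j < n" for j
  proof -
    have "in_col_span n (take (Suc j) ?E) (A *\<^sub>v ?e j)"
      using no_step j unfolding krylov_step_def E by (simp add: krylov_chain_fst take_map)
    then obtain a where a: "a \<in> carrier_vec (Suc j)"
      and aa: "mat_of_cols n (take (Suc j) ?E) *\<^sub>v a = A *\<^sub>v ?e j"
      unfolding in_col_span_def using j lenE by (auto simp: min_absorb2)
    let ?pad = "vec n (\<lambda>i. if i \<le> j then a $ i else 0)"
    have "A *\<^sub>v ?e j = P *\<^sub>v ?pad"
      using aa mult_mat_of_cols_take[OF _ a, of ?E n] j lenE unfolding P_def by simp
    hence "Q *\<^sub>v (A *\<^sub>v ?e j) = (Q * P) *\<^sub>v ?pad" using Qc Pc by simp
    thus ?thesis using QP by auto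
  qed
  have subdiag: "?B $$ (Suc j, j) = (if krylov_step n A v j then (-1)^(?c j) else 0)" if "Suc j < n"
    for j
  proof (cases "krylov_step n A v j")
    case False with no_step[of j] that show ?thesis using entry[OF that, of j] by auto
  qed (use entry[OF that, of j] step that in simp)
  have step0: "krylov_step n A v 0" using new unfolding krylov_step_def by simp
  have "upper_hessenberg n ?B" unfolding upper_hessenberg_def
  proof (intro allI impI)
    fix i j assume i: "i < n" and j: "j < n" and ij: "Suc j < i"
    show "?B $$ (i,j) = 0"
    proof (cases "krylov_step n A v j")
      case False with no_step[OF _ j] show ?thesis using entry[OF i j] ij i by auto
    qed (use entry[OF i j] step ij i in simp)
  qed
  moreover have "?B $$ (0,0) = 0" "?B $$ (1,0) = 1"
    using entry[of 0 0] step[OF step0] subdiag[of 0] step0 n by auto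
  moreover have "(\<Sum>j<n-1. ?B $$ (Suc j, j)) = (if even (?c (n - 1)) then 0 else 1)"
    using subdiag krylov_subdiag_sum[where k = "n - 1" and n = n and A = A and v = v] by simp
  ultimately show ?thesis using that Pc Qc QP PQ by (metis (no_types, lifting))
qed

theorem traceless_is_commutator:
  fixes A :: "'a::field mat"
  assumes A: "A \<in> carrier_mat n n" and tr: "mat_trace A = 0"
  shows "is_commutator n A"
proof (cases "\<forall>i<n. \<forall>j<n. i \<noteq> j \<longrightarrow> A $$ (i,j) = 0")
  case True
  hence "diag_sum n A c = 0" if "c \<le> 0" for c
    using that diag_sum_0[OF A] tr diag_sum_diagonal_mat[of c n A] by (cases "c = 0") auto
  thus ?thesis using is_commutator_if_diag_sums_vanish[OF A] by blast
next
  case False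
  then obtain i j where i: "i < n" and j: "j < n" and ij: "i \<noteq> j" and aij: "A $$ (i,j) \<noteq> 0" by blast
  \<comment> \<open>An off-diagonal entry makes v = e_j and A v independent, which starts the Krylov basis.\<close>
  have new: "\<not> in_col_span n [unit_vec n j] (A *\<^sub>v unit_vec n j)"
  proof
    assume "in_col_span n [unit_vec n j] (A *\<^sub>v unit_vec n j)"
    then obtain a where a: "a \<in> carrier_vec 1"
      and e: "mat_of_cols n [unit_vec n j] *\<^sub>v a = A *\<^sub>v unit_vec n j"
      unfolding in_col_span_def by auto
    have "(mat_of_cols n [unit_vec n j] *\<^sub>v a) $ i = 0"
      using i j a ij by (simp add: scalar_prod_def mat_of_cols_index)
    moreover have "(A *\<^sub>v unit_vec n j) $ i = A $$ (i,j)"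
      using mult_mat_unit_vec[OF A j] i j A by simp
    ultimately show False using aij e by simp
  qed
  obtain m where m: "n = Suc m" and "1 \<le> m" using i j ij by (cases n) auto
  obtain P Q where PQ: "P \<in> carrier_mat n n" "Q \<in> carrier_mat n n" "Q * P = 1\<^sub>m n" "P * Q = 1\<^sub>m n"
    and hess: "upper_hessenberg n (Q * A * P)" and corner: "(Q * A * P) $$ (0,0) = 0"
    and first: "(Q * A * P) $$ (1,0) = 1"
    and sum: "(\<Sum>j<n-1. (Q * A * P) $$ (Suc j, j)) = 0 \<or> (\<Sum>j<n-1. (Q * A * P) $$ (Suc j, j)) = 1"
    using krylov_normal_form[OF A _ new] \<open>1 \<le> m\<close> m by auto
  have "mat_trace (Q * A * P) = 0" using mat_trace_similar[OF A PQ(1,2,4)] tr by simp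
  moreover have "Q * A * P \<in> carrier_mat (Suc m) (Suc m)" using PQ A m by auto
  ultimately have "is_commutator n (Q * A * P)"
    using upper_hessenberg_commutator[of "Q * A * P" m] hess corner first sum \<open>1 \<le> m\<close>
    unfolding m by (simp only: diff_Suc_1)
  thus ?thesis using is_commutator_similar[OF A PQ] by blast
qed

section \<open>Traces on quotient spaces\<close>

definition is_subspace :: "nat \<Rightarrow> 'a::field vec set \<Rightarrow> bool" where
  "is_subspace m U \<longleftrightarrow> U \<subseteq> carrier_vec m \<and> 0\<^sub>v m \<in> U \<and>
     (\<forall>x\<in>U. \<forall>y\<in>U. x + y \<in> U) \<and> (\<forall>c. \<forall>x\<in>U. c \<cdot>\<^sub>v x \<in> U)"

lemma is_subspaceD:
  assumes "is_subspace m U"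
  shows "U \<subseteq> carrier_vec m" "0\<^sub>v m \<in> U" "\<And>x y. x \<in> U \<Longrightarrow> y \<in> U \<Longrightarrow> x + y \<in> U"
    "\<And>c x. x \<in> U \<Longrightarrow> c \<cdot>\<^sub>v x \<in> U"
  using assms unfolding is_subspace_def by auto

lemma subspace_carrier_vec: "is_subspace m (carrier_vec m :: 'a::field vec set)"
  unfolding is_subspace_def by auto

lemma subspace_zero: "is_subspace m {0\<^sub>v m :: 'a::field vec}"
  unfolding is_subspace_def by auto

lemma subspace_kernel:
  fixes D :: "'a::field mat"
  assumes D: "D \<in> carrier_mat m' m"
  shows "is_subspace m {v \<in> carrier_vec m. D *\<^sub>v v = 0\<^sub>v m'}"
  unfolding is_subspace_def
proof (intro conjI ballI allI)
  fix x y assume x: "x \<in> {v \<in> carrier_vec m. D *\<^sub>v v = 0\<^sub>v m'}"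
    and y: "y \<in> {v \<in> carrier_vec m. D *\<^sub>v v = 0\<^sub>v m'}"
  thus "x + y \<in> {v \<in> carrier_vec m. D *\<^sub>v v = 0\<^sub>v m'}" using mult_add_distrib_mat_vec[OF D] by auto
next
  fix c :: 'a and x assume x: "x \<in> {v \<in> carrier_vec m. D *\<^sub>v v = 0\<^sub>v m'}"
  thus "c \<cdot>\<^sub>v x \<in> {v \<in> carrier_vec m. D *\<^sub>v v = 0\<^sub>v m'}" using mult_mat_vec[OF D] by auto
qed (use D in auto)

lemma subspace_image:
  fixes D :: "'a::field mat"
  assumes D: "D \<in> carrier_mat m' m"
  shows "is_subspace m' {D *\<^sub>v w | w. w \<in> carrier_vec m}"
  unfolding is_subspace_def
proof (intro conjI ballI allI)
  show "{D *\<^sub>v w | w. w \<in> carrier_vec m} \<subseteq> carrier_vec m'" using D by auto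
  show "0\<^sub>v m' \<in> {D *\<^sub>v w | w. w \<in> carrier_vec m}" using D by (intro CollectI exI[of _ "0\<^sub>v m"]) auto
  fix x y assume x: "x \<in> {D *\<^sub>v w | w. w \<in> carrier_vec m}"
    and y: "y \<in> {D *\<^sub>v w | w. w \<in> carrier_vec m}"
  then obtain wx wy where "wx \<in> carrier_vec m" "wy \<in> carrier_vec m" "x = D *\<^sub>v wx" "y = D *\<^sub>v wy"
    by blast
  thus "x + y \<in> {D *\<^sub>v w | w. w \<in> carrier_vec m}" using mult_add_distrib_mat_vec[OF D]
    by (intro CollectI exI[of _ "wx + wy"]) auto
next
  fix c :: 'a and x assume "x \<in> {D *\<^sub>v w | w. w \<in> carrier_vec m}"
  then obtain w where "w \<in> carrier_vec m" "x = D *\<^sub>v w" by blast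
  thus "c \<cdot>\<^sub>v x \<in> {D *\<^sub>v w | w. w \<in> carrier_vec m}" using mult_mat_vec[OF D]
    by (intro CollectI exI[of _ "c \<cdot>\<^sub>v w"]) auto
qed


lemma subspace_minus:
  assumes U: "is_subspace m U" and x: "x \<in> U" and y: "y \<in> U"
  shows "x - y \<in> U"
proof -
  have xc: "x \<in> carrier_vec m" and yc: "y \<in> carrier_vec m" using is_subspaceD(1)[OF U] x y by auto
  have "x - y = x + (-1) \<cdot>\<^sub>v y" by (rule eq_vecI) (use xc yc in auto)
  thus ?thesis using is_subspaceD(3,4)[OF U] x y by auto
qed

lemma subspace_diff_trans:
  assumes U: "is_subspace m U" and c: "x \<in> carrier_vec m" "y \<in> carrier_vec m" "z \<in> carrier_vec m"
    and "x - y \<in> U" "y - z \<in> U"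
  shows "x - z \<in> U"
proof -
  have "x - z = (x - y) + (y - z)" by (rule eq_vecI) (use c in auto)
  thus ?thesis using is_subspaceD(3)[OF U] assms by auto
qed

lemma subspace_diff_commute:
  assumes U: "is_subspace m U" and c: "x \<in> carrier_vec m" "y \<in> carrier_vec m" and "x - y \<in> U"
  shows "y - x \<in> U"
proof -
  have "y - x = (-1) \<cdot>\<^sub>v (x - y)" by (rule eq_vecI) (use c in auto)
  thus ?thesis using is_subspaceD(4)[OF U] assms by auto
qed

lemma subspace_diff_mult_mat:
  fixes A :: "'a::field mat"
  assumes U: "is_subspace m U" and A: "A \<in> carrier_mat m m" and AU: "\<forall>u\<in>U. A *\<^sub>v u \<in> U"
    and c: "x \<in> carrier_vec m" "y \<in> carrier_vec m" and "x - y \<in> U"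
  shows "A *\<^sub>v x - A *\<^sub>v y \<in> U"
proof -
  have "A *\<^sub>v x - A *\<^sub>v y = A *\<^sub>v (x - y)" by (rule mult_minus_distrib_mat_vec[symmetric, OF A c])
  thus ?thesis using AU assms by auto
qed

lemma mult_mat_vec_split_last:
  fixes B :: "'a::comm_ring_1 mat"
  assumes B: "B \<in> carrier_mat m (Suc r)" and a: "a \<in> carrier_vec (Suc r)"
  shows "B *\<^sub>v a = mat m r (\<lambda>(i,j). B $$ (i,j)) *\<^sub>v vec r (\<lambda>i. a $ i) + a $ r \<cdot>\<^sub>v col B r"
proof (rule eq_vecI)
  fix i assume "i < dim_vec (mat m r (\<lambda>(i,j). B $$ (i,j)) *\<^sub>v vec r (\<lambda>i. a $ i) + a $ r \<cdot>\<^sub>v col B r)"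
  hence i: "i < m" using B by simp
  have "(B *\<^sub>v a) $ i = (\<Sum>j<Suc r. B $$ (i,j) * a $ j)"
    using i B a by (simp add: scalar_prod_def atLeast0LessThan)
  also have "\<dots> = (\<Sum>j<r. B $$ (i,j) * a $ j) + B $$ (i,r) * a $ r" by simp
  finally show "(B *\<^sub>v a) $ i = (mat m r (\<lambda>(i,j). B $$ (i,j)) *\<^sub>v vec r (\<lambda>i. a $ i)
      + a $ r \<cdot>\<^sub>v col B r) $ i"
    using i B by (simp add: scalar_prod_def atLeast0LessThan mult.commute)
qed (use B in simp)

lemma subspace_mult_mat_vec:
  fixes B :: "'a::field mat"
  assumes U: "is_subspace m U"
  shows "B \<in> carrier_mat m r \<Longrightarrow> (\<And>j. j < r \<Longrightarrow> col B j \<in> U) \<Longrightarrow> a \<in> carrier_vec r \<Longrightarrow> B *\<^sub>v a \<in> U"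
proof (induction r arbitrary: B a)
  case 0
  have "B *\<^sub>v a = 0\<^sub>v m" using 0 by (intro eq_vecI) (auto simp: scalar_prod_def)
  thus ?case using is_subspaceD(2)[OF U] by simp
next
  case (Suc r)
  let ?B' = "mat m r (\<lambda>(i,j). B $$ (i,j))"
  have "?B' *\<^sub>v vec r (\<lambda>i. a $ i) \<in> U"
  proof (rule Suc.IH)
    fix j assume j: "j < r"
    have "col ?B' j = col B j" using j Suc.prems(1) by (intro eq_vecI) auto
    thus "col ?B' j \<in> U" using Suc.prems(2) j by simp
  qed auto
  moreover have "a $ r \<cdot>\<^sub>v col B r \<in> U" using Suc.prems(2) is_subspaceD(4)[OF U] by simp
  ultimately show ?case
    using mult_mat_vec_split_last[OF Suc.prems(1,3)] is_subspaceD(3)[OF U] by simp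
qed

lemma subspace_mult_mat_vec_unit:
  fixes B :: "'a::field mat"
  assumes U: "is_subspace m U" and B: "B \<in> carrier_mat m r"
    and cols: "\<And>j. j < r \<Longrightarrow> B *\<^sub>v unit_vec r j \<in> U" and a: "a \<in> carrier_vec r"
  shows "B *\<^sub>v a \<in> U"
  by (rule subspace_mult_mat_vec[OF U B _ a]) (use cols mult_mat_unit_vec[OF B] in auto)

lemma lift_mod_subspace:
  fixes B B' :: "'a::field mat"
  assumes U: "is_subspace m U" and B: "B \<in> carrier_mat m r" and B': "B' \<in> carrier_mat m r'"
    and ex: "\<And>j. j < r \<Longrightarrow> \<exists>a'\<in>carrier_vec r'. B *\<^sub>v unit_vec r j - B' *\<^sub>v a' \<in> U"
  shows "\<exists>P. P \<in> carrier_mat r' r \<and> (\<forall>a\<in>carrier_vec r. B *\<^sub>v a - B' *\<^sub>v (P *\<^sub>v a) \<in> U)"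
proof -
  define f where "f j = (SOME a'. a' \<in> carrier_vec r' \<and> B *\<^sub>v unit_vec r j - B' *\<^sub>v a' \<in> U)" for j
  have f: "f j \<in> carrier_vec r' \<and> B *\<^sub>v unit_vec r j - B' *\<^sub>v f j \<in> U" if "j < r" for j
    unfolding f_def by (rule someI_ex) (use ex[OF that] in auto)
  define P where "P = mat r' r (\<lambda>(i,j). f j $ i)"
  have Pc: "P \<in> carrier_mat r' r" by (simp add: P_def)
  have colP: "P *\<^sub>v unit_vec r j = f j" if "j < r" for j
    using mult_mat_unit_vec[OF Pc that] f[OF that] that by (auto simp: P_def)
  have "(B - B' * P) *\<^sub>v a \<in> U" if a: "a \<in> carrier_vec r" for a
  proof (rule subspace_mult_mat_vec_unit[OF U _ _ a])
    show "B - B' * P \<in> carrier_mat m r" using B B' Pc by auto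
    fix j assume j: "j < r"
    have "(B - B' * P) *\<^sub>v unit_vec r j = B *\<^sub>v unit_vec r j - (B' * P) *\<^sub>v unit_vec r j"
      by (rule minus_mult_distrib_mat_vec) (use B B' Pc in auto)
    also have "(B' * P) *\<^sub>v unit_vec r j = B' *\<^sub>v f j"
      using assoc_mult_mat_vec[OF B' Pc, of "unit_vec r j"] colP[OF j] by simp
    finally show "(B - B' * P) *\<^sub>v unit_vec r j \<in> U" using f[OF j] by simp
  qed
  moreover have "(B - B' * P) *\<^sub>v a = B *\<^sub>v a - B' *\<^sub>v (P *\<^sub>v a)" if a: "a \<in> carrier_vec r" for a
  proof -
    have "(B - B' * P) *\<^sub>v a = B *\<^sub>v a - (B' * P) *\<^sub>v a"
      by (rule minus_mult_distrib_mat_vec) (use B B' Pc a in auto)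
    thus ?thesis using assoc_mult_mat_vec[OF B' Pc a] by simp
  qed
  ultimately show ?thesis using Pc by auto
qed

lemma eq_vec_of_diff_zero:
  assumes "x \<in> carrier_vec m" "y \<in> carrier_vec m" "x - y = 0\<^sub>v m"
  shows "x = (y :: 'a::comm_ring_1 vec)"
proof (rule eq_vecI)
  fix i assume i: "i < dim_vec y"
  have "(x - y) $ i = 0" using assms(3) i assms(2) by simp
  thus "x $ i = y $ i" using i assms(1,2) by simp
qed (use assms in simp)

definition quot_independent :: "nat \<Rightarrow> 'a::field vec set \<Rightarrow> 'a vec set \<Rightarrow> nat \<Rightarrow> 'a mat \<Rightarrow> bool" where
  "quot_independent m W U r B \<longleftrightarrow> B \<in> carrier_mat m r \<and> (\<forall>a\<in>carrier_vec r. B *\<^sub>v a \<in> W) \<and>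
     (\<forall>a\<in>carrier_vec r. B *\<^sub>v a \<in> U \<longrightarrow> a = 0\<^sub>v r)"

definition quot_basis :: "nat \<Rightarrow> 'a::field vec set \<Rightarrow> 'a vec set \<Rightarrow> nat \<Rightarrow> 'a mat \<Rightarrow> bool" where
  "quot_basis m W U r B \<longleftrightarrow> quot_independent m W U r B \<and> (\<forall>w\<in>W. \<exists>a\<in>carrier_vec r. w - B *\<^sub>v a \<in> U)"

definition quot_rep ::
  "nat \<Rightarrow> 'a::field mat \<Rightarrow> 'a vec set \<Rightarrow> 'a vec set \<Rightarrow> nat \<Rightarrow> 'a mat \<Rightarrow> 'a mat \<Rightarrow> bool" where
  "quot_rep m A W U r B C \<longleftrightarrow> quot_basis m W U r B \<and> C \<in> carrier_mat r r \<and>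
     (\<forall>a\<in>carrier_vec r. A *\<^sub>v (B *\<^sub>v a) - B *\<^sub>v (C *\<^sub>v a) \<in> U)"

definition invariant_pair :: "nat \<Rightarrow> 'a::field mat \<Rightarrow> 'a vec set \<Rightarrow> 'a vec set \<Rightarrow> bool" where
  "invariant_pair m A W U \<longleftrightarrow> A \<in> carrier_mat m m \<and> is_subspace m W \<and> is_subspace m U \<and> U \<subseteq> W \<and>
     (\<forall>w\<in>W. A *\<^sub>v w \<in> W) \<and> (\<forall>u\<in>U. A *\<^sub>v u \<in> U)"

lemma quot_repD:
  assumes "quot_rep m A W U r B C"
  shows "B \<in> carrier_mat m r" "C \<in> carrier_mat r r" "\<And>a. a \<in> carrier_vec r \<Longrightarrow> B *\<^sub>v a \<in> W"
    "\<And>w. w \<in> W \<Longrightarrow> \<exists>a\<in>carrier_vec r. w - B *\<^sub>v a \<in> U"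
    "\<And>a. a \<in> carrier_vec r \<Longrightarrow> B *\<^sub>v a \<in> U \<Longrightarrow> a = 0\<^sub>v r"
    "\<And>a. a \<in> carrier_vec r \<Longrightarrow> A *\<^sub>v (B *\<^sub>v a) - B *\<^sub>v (C *\<^sub>v a) \<in> U"
  using assms unfolding quot_rep_def quot_basis_def quot_independent_def by auto

lemma quot_independent_dim_le:
  assumes "quot_independent m W U r B" and "is_subspace m U"
  shows "r \<le> m"
  using assms injective_mat_dim_le[of B m r] is_subspaceD(2)[of m U]
  unfolding quot_independent_def by metis

lemma quot_independent_snoc:
  fixes B :: "'a::field mat"
  assumes W: "is_subspace m W" and U: "is_subspace m U" and ind: "quot_independent m W U r B"
    and w: "w \<in> W" and new: "\<And>a. a \<in> carrier_vec r \<Longrightarrow> w - B *\<^sub>v a \<notin> U"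
  shows "quot_independent m W U (Suc r)
      (mat m (Suc r) (\<lambda>(i,j). if j < r then B $$ (i,j) else w $ i))"
    (is "quot_independent _ _ _ _ ?B2")
proof -
  have B: "B \<in> carrier_mat m r" and BW: "\<And>a. a \<in> carrier_vec r \<Longrightarrow> B *\<^sub>v a \<in> W"
    and Binj: "\<And>a. a \<in> carrier_vec r \<Longrightarrow> B *\<^sub>v a \<in> U \<Longrightarrow> a = 0\<^sub>v r"
    using ind unfolding quot_independent_def by auto
  have wc: "w \<in> carrier_vec m" using w is_subspaceD(1)[OF W] by auto
  have B2c: "?B2 \<in> carrier_mat m (Suc r)" by simp
  have split: "?B2 *\<^sub>v a = B *\<^sub>v vec r (\<lambda>i. a $ i) + a $ r \<cdot>\<^sub>v w" if "a \<in> carrier_vec (Suc r)" for a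
  proof -
    have "mat m r (\<lambda>(i,j). ?B2 $$ (i,j)) = B" using B by (intro eq_matI) auto
    moreover have "col ?B2 r = w" using wc by (intro eq_vecI) auto
    ultimately show ?thesis using mult_mat_vec_split_last[OF B2c that] by simp
  qed
  show ?thesis unfolding quot_independent_def
  proof (intro conjI ballI impI B2c)
    fix a :: "'a vec" assume a: "a \<in> carrier_vec (Suc r)"
    let ?a' = "vec r (\<lambda>i. a $ i)"
    show "?B2 *\<^sub>v a \<in> W" unfolding split[OF a]
      using is_subspaceD(3)[OF W BW is_subspaceD(4)[OF W w]] by simp
    assume inU: "?B2 *\<^sub>v a \<in> U"
    have last: "a $ r = 0"
    proof (rule ccontr)
      assume c: "a $ r \<noteq> 0"
      have "w - B *\<^sub>v ((- inverse (a $ r)) \<cdot>\<^sub>v ?a') = inverse (a $ r) \<cdot>\<^sub>v (?B2 *\<^sub>v a)"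
      proof (rule eq_vecI)
        fix i assume "i < dim_vec (inverse (a $ r) \<cdot>\<^sub>v (?B2 *\<^sub>v a))" hence i: "i < m" by simp
        have "(?B2 *\<^sub>v a) $ i = (B *\<^sub>v ?a') $ i + a $ r * w $ i" using split[OF a] i B wc by simp
        thus "(w - B *\<^sub>v ((- inverse (a $ r)) \<cdot>\<^sub>v ?a')) $ i = (inverse (a $ r) \<cdot>\<^sub>v (?B2 *\<^sub>v a)) $ i"
          using i B wc c by (simp add: mult_mat_vec field_simps)
      qed (use wc B in simp)
      hence "w - B *\<^sub>v ((- inverse (a $ r)) \<cdot>\<^sub>v ?a') \<in> U" using is_subspaceD(4)[OF U inU] by simp
      thus False using new[of "(- inverse (a $ r)) \<cdot>\<^sub>v ?a'"] by simp
    qed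
    have "a $ r \<cdot>\<^sub>v w = 0\<^sub>v m" using last wc by (intro eq_vecI) auto
    hence "?B2 *\<^sub>v a = B *\<^sub>v ?a'" using split[OF a] B by simp
    hence init: "?a' = 0\<^sub>v r" using Binj inU by auto
    show "a = 0\<^sub>v (Suc r)"
    proof (rule eq_vecI)
      fix i assume "i < dim_vec (0\<^sub>v (Suc r) :: 'a vec)"
      thus "a $ i = 0\<^sub>v (Suc r) $ i"
        using last arg_cong[OF init, of "\<lambda>v. v $ i"] by (cases "i = r") auto
    qed (use a in simp)
  qed
qed

text \<open>A quotient basis is a maximal quotient-independent family.\<close>

lemma quot_basis_exists:
  fixes W U :: "'a::field vec set"
  assumes W: "is_subspace m W" and U: "is_subspace m U"
  shows "\<exists>r B. quot_basis m W U r B"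
proof -
  define R where "R r \<longleftrightarrow> (\<exists>B. quot_independent m W U r B)" for r
  have "quot_independent m W U 0 (0\<^sub>m m 0)"
    unfolding quot_independent_def using is_subspaceD(2)[OF W] by auto
  hence R0: "R 0" unfolding R_def by blast
  have Rb: "R r \<Longrightarrow> r \<le> m" for r unfolding R_def using quot_independent_dim_le[OF _ U] by blast
  define r0 where "r0 = (GREATEST r. R r)"
  have "R r0" unfolding r0_def by (rule GreatestI_nat[of R 0 m]) (use R0 Rb in auto)
  then obtain B where ind: "quot_independent m W U r0 B" unfolding R_def by blast
  have "\<forall>w\<in>W. \<exists>a\<in>carrier_vec r0. w - B *\<^sub>v a \<in> U"
  proof (rule ccontr)
    assume "\<not> ?thesis"
    then obtain w where "w \<in> W" "\<And>a. a \<in> carrier_vec r0 \<Longrightarrow> w - B *\<^sub>v a \<notin> U" by blast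
    from quot_independent_snoc[OF W U ind this] have "R (Suc r0)" unfolding R_def by blast
    moreover have "R r \<Longrightarrow> r \<le> r0" for r
      unfolding r0_def by (rule Greatest_le_nat[of R r m]) (use Rb in auto)
    ultimately show False by force
  qed
  thus ?thesis using ind unfolding quot_basis_def by blast
qed

lemma quot_rep_exists:
  fixes A :: "'a::field mat"
  assumes g: "invariant_pair m A W U"
  shows "\<exists>r B C. quot_rep m A W U r B C"
proof -
  have A: "A \<in> carrier_mat m m" and AW: "\<forall>w\<in>W. A *\<^sub>v w \<in> W"
    and W: "is_subspace m W" and U: "is_subspace m U"
    using g unfolding invariant_pair_def by auto
  obtain r B where basis: "quot_basis m W U r B" using quot_basis_exists[OF W U] by blast
  have B: "B \<in> carrier_mat m r" and BW: "\<forall>a\<in>carrier_vec r. B *\<^sub>v a \<in> W"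
    and span: "\<forall>w\<in>W. \<exists>a\<in>carrier_vec r. w - B *\<^sub>v a \<in> U"
    using basis unfolding quot_basis_def quot_independent_def by auto
  have AB: "A * B \<in> carrier_mat m r" using A B by simp
  have "\<exists>a'\<in>carrier_vec r. (A * B) *\<^sub>v unit_vec r j - B *\<^sub>v a' \<in> U" for j
    using span AW BW A B by simp
  then obtain C where C: "C \<in> carrier_mat r r"
    and ABC: "\<forall>a\<in>carrier_vec r. (A * B) *\<^sub>v a - B *\<^sub>v (C *\<^sub>v a) \<in> U"
    using lift_mod_subspace[OF U AB B] by blast
  have "quot_rep m A W U r B C"
    unfolding quot_rep_def using basis C ABC A B by simp
  thus ?thesis by blast
qed

lemma quot_rep_intertwine:
  fixes A :: "'a::field mat"
  assumes g: "invariant_pair m A W U"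
    and q: "quot_rep m A W U r B C" and q': "quot_rep m A W U r' B' C'"
    and P: "P \<in> carrier_mat r' r" and PB: "\<forall>a\<in>carrier_vec r. B *\<^sub>v a - B' *\<^sub>v (P *\<^sub>v a) \<in> U"
    and Q: "Q \<in> carrier_mat r r'" and QB: "\<forall>a\<in>carrier_vec r'. B' *\<^sub>v a - B *\<^sub>v (Q *\<^sub>v a) \<in> U"
  shows "C = Q * C' * P"
proof (rule eq_mat_by_mult_vec)
  have A: "A \<in> carrier_mat m m" and U: "is_subspace m U" and AU: "\<forall>u\<in>U. A *\<^sub>v u \<in> U"
    using g unfolding invariant_pair_def by auto
  note B = quot_repD(1)[OF q] and C = quot_repD(2)[OF q] and B' = quot_repD(1)[OF q']
    and C' = quot_repD(2)[OF q']
  show "C \<in> carrier_mat r r" "Q * C' * P \<in> carrier_mat r r" using C Q C' P by auto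
  fix a :: "'a vec" assume a: "a \<in> carrier_vec r"
  let ?x = "P *\<^sub>v a" let ?y = "C' *\<^sub>v ?x"
  have xc: "?x \<in> carrier_vec r'" and yc: "?y \<in> carrier_vec r'" using P C' a by auto
  have c: "B *\<^sub>v (C *\<^sub>v a) \<in> carrier_vec m" "A *\<^sub>v (B *\<^sub>v a) \<in> carrier_vec m"
    "A *\<^sub>v (B' *\<^sub>v ?x) \<in> carrier_vec m" "B' *\<^sub>v ?y \<in> carrier_vec m" "B *\<^sub>v (Q *\<^sub>v ?y) \<in> carrier_vec m"
    "B *\<^sub>v a \<in> carrier_vec m" "B' *\<^sub>v ?x \<in> carrier_vec m"
    using A B B' C Q a xc yc by auto
  \<comment> \<open>Modulo U: B C a \<equiv> A B a \<equiv> A B' P a \<equiv> B' C' P a \<equiv> B Q C' P a.\<close>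
  have "B *\<^sub>v (C *\<^sub>v a) - A *\<^sub>v (B *\<^sub>v a) \<in> U"
    by (rule subspace_diff_commute[OF U]) (use c quot_repD(6)[OF q a] in auto)
  moreover have "A *\<^sub>v (B *\<^sub>v a) - A *\<^sub>v (B' *\<^sub>v ?x) \<in> U"
    by (rule subspace_diff_mult_mat[OF U A AU]) (use c PB a in auto)
  moreover have "A *\<^sub>v (B' *\<^sub>v ?x) - B' *\<^sub>v ?y \<in> U" using quot_repD(6)[OF q' xc] .
  moreover have "B' *\<^sub>v ?y - B *\<^sub>v (Q *\<^sub>v ?y) \<in> U" using QB yc by auto
  ultimately have "B *\<^sub>v (C *\<^sub>v a) - B *\<^sub>v (Q *\<^sub>v ?y) \<in> U"
    using subspace_diff_trans[OF U] c by meson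
  moreover have "B *\<^sub>v (C *\<^sub>v a) - B *\<^sub>v (Q *\<^sub>v ?y) = B *\<^sub>v (C *\<^sub>v a - Q *\<^sub>v ?y)"
    by (rule mult_minus_distrib_mat_vec[symmetric, OF B]) (use C Q a yc in auto)
  ultimately have "C *\<^sub>v a - Q *\<^sub>v ?y = 0\<^sub>v r" using quot_repD(5)[OF q] C Q a yc by auto
  hence "C *\<^sub>v a = Q *\<^sub>v ?y" using eq_vec_of_diff_zero[of "C *\<^sub>v a" r "Q *\<^sub>v ?y"] C Q a yc by auto
  also have "\<dots> = (Q * C' * P) *\<^sub>v a"
    using assoc_mult_mat_vec[of "Q * C'" r r' P r a] assoc_mult_mat_vec[OF Q C' xc] Q C' P a by simp
  finally show "C *\<^sub>v a = (Q * C' * P) *\<^sub>v a" .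
qed

lemma quot_transition_inverse:
  fixes B B' :: "'a::field mat"
  assumes U: "is_subspace m U" and B: "B \<in> carrier_mat m r" and ind': "quot_independent m W U r' B'"
    and P: "P \<in> carrier_mat r' r" and PB: "\<forall>a\<in>carrier_vec r. B *\<^sub>v a - B' *\<^sub>v (P *\<^sub>v a) \<in> U"
    and Q: "Q \<in> carrier_mat r r'" and QB: "\<forall>a\<in>carrier_vec r'. B' *\<^sub>v a - B *\<^sub>v (Q *\<^sub>v a) \<in> U"
  shows "P * Q = 1\<^sub>m r'"
proof (rule eq_mat_by_mult_vec)
  have B': "B' \<in> carrier_mat m r'" using ind' unfolding quot_independent_def by auto
  show "P * Q \<in> carrier_mat r' r'" "1\<^sub>m r' \<in> carrier_mat r' r'" using P Q by auto
  fix a :: "'a vec" assume a: "a \<in> carrier_vec r'"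
  let ?z = "P *\<^sub>v (Q *\<^sub>v a)"
  have zc: "?z \<in> carrier_vec r'" "Q *\<^sub>v a \<in> carrier_vec r" using P Q a by auto
  have "B' *\<^sub>v a - B' *\<^sub>v ?z \<in> U"
    by (rule subspace_diff_trans[OF U _ _ _ _ PB[rule_format, OF zc(2)]]) (use QB a B B' zc in auto)
  moreover have "B' *\<^sub>v a - B' *\<^sub>v ?z = B' *\<^sub>v (a - ?z)"
    by (rule mult_minus_distrib_mat_vec[symmetric, OF B']) (use a zc in auto)
  ultimately have "a - ?z = 0\<^sub>v r'" using ind' a zc unfolding quot_independent_def by auto
  hence "a = ?z" using eq_vec_of_diff_zero[of a r' ?z] a zc by auto
  thus "(P * Q) *\<^sub>v a = 1\<^sub>m r' *\<^sub>v a" using P Q a by simp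
qed

lemma quot_rep_trace_unique:
  fixes A :: "'a::field mat"
  assumes g: "invariant_pair m A W U" and q: "quot_rep m A W U r B C"
    and q': "quot_rep m A W U r' B' C'"
  shows "mat_trace C = mat_trace C'"
proof -
  have U: "is_subspace m U" using g unfolding invariant_pair_def by auto
  note B = quot_repD(1)[OF q] and B' = quot_repD(1)[OF q'] and C' = quot_repD(2)[OF q']
  obtain P where P: "P \<in> carrier_mat r' r" and PB: "\<forall>a\<in>carrier_vec r. B *\<^sub>v a - B' *\<^sub>v (P *\<^sub>v a) \<in> U"
    using lift_mod_subspace[OF U B B'] quot_repD(3,4)[OF q'] quot_repD(3)[OF q]
    by (meson unit_vec_carrier)
  obtain Q where Q: "Q \<in> carrier_mat r r'" and QB: "\<forall>a\<in>carrier_vec r'. B' *\<^sub>v a - B *\<^sub>v (Q *\<^sub>v a) \<in> U"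
    using lift_mod_subspace[OF U B' B] quot_repD(3,4)[OF q] quot_repD(3)[OF q']
    by (meson unit_vec_carrier)
  have PQ: "P * Q = 1\<^sub>m r'"
    using quot_transition_inverse[OF U B _ P PB Q QB] q' unfolding quot_rep_def quot_basis_def
    by blast
  have "mat_trace C = mat_trace ((Q * C') * P)"
    using quot_rep_intertwine[OF g q q' P PB Q QB] by simp
  also have "\<dots> = mat_trace (P * (Q * C'))" by (rule mat_trace_mult_comm) (use Q C' P in auto)
  also have "P * (Q * C') = (P * Q) * C'" using P Q C' by simp
  finally show ?thesis using PQ C' by simp
qed

lemma quot_trace_eqI:
  fixes A :: "'a::field mat"
  assumes g: "invariant_pair m A W U" and q: "quot_rep m A W U r B C"
  shows "quot_trace m A W U = mat_trace C"
  unfolding quot_trace_def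
proof (rule the_equality, goal_cases)
  case 1
  show ?case using q unfolding quot_rep_def quot_basis_def quot_independent_def by blast
next
  case (2 t)
  then obtain r' B' C' where "quot_rep m A W U r' B' C'" "t = mat_trace C'"
    unfolding quot_rep_def quot_basis_def quot_independent_def by blast
  thus ?case using quot_rep_trace_unique[OF g q] by simp
qed

lemma sum_lessThan_add:
  fixes f :: "nat \<Rightarrow> 'a::comm_monoid_add"
  shows "(\<Sum>j<a + b. f j) = (\<Sum>j<a. f j) + (\<Sum>j<b. f (a + j))"
  by (induction b) (simp_all add: add.assoc)

lemma carrier_vec_add_cases:
  assumes "a \<in> carrier_vec (p + q)"
  obtains v w where "v \<in> carrier_vec p" "w \<in> carrier_vec q" "a = v @\<^sub>v w"
  using vec_first_last_append[OF assms] vec_first_carrier vec_last_carrier by metis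

definition hconcat_mat :: "nat \<Rightarrow> 'a mat \<Rightarrow> 'a mat \<Rightarrow> 'a mat" where
  "hconcat_mat m B2 B1 = mat m (dim_col B2 + dim_col B1)
     (\<lambda>(i,j). if j < dim_col B2 then B2 $$ (i,j) else B1 $$ (i, j - dim_col B2))"

lemma hconcat_mat_carrier: "B2 \<in> carrier_mat m p \<Longrightarrow> B1 \<in> carrier_mat m q
    \<Longrightarrow> hconcat_mat m B2 B1 \<in> carrier_mat m (p + q)"
  by (simp add: hconcat_mat_def)

lemma hconcat_mat_mult_vec:
  fixes B2 B1 :: "'a::comm_ring_1 mat"
  assumes B2: "B2 \<in> carrier_mat m p" and B1: "B1 \<in> carrier_mat m q"
    and v: "v \<in> carrier_vec p" and w: "w \<in> carrier_vec q"
  shows "hconcat_mat m B2 B1 *\<^sub>v (v @\<^sub>v w) = B2 *\<^sub>v v + B1 *\<^sub>v w"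
proof (rule eq_vecI)
  fix i assume "i < dim_vec (B2 *\<^sub>v v + B1 *\<^sub>v w)" hence i: "i < m" using B1 by simp
  have "(hconcat_mat m B2 B1 *\<^sub>v (v @\<^sub>v w)) $ i
      = (\<Sum>j<p+q. hconcat_mat m B2 B1 $$ (i,j) * (v @\<^sub>v w) $ j)"
    using i B2 B1 v w by (simp add: hconcat_mat_def scalar_prod_def atLeast0LessThan)
  also have "\<dots> = (\<Sum>j<p. B2 $$ (i,j) * v $ j) + (\<Sum>j<q. B1 $$ (i,j) * w $ j)"
    unfolding sum_lessThan_add using i B2 B1 v w by (simp add: hconcat_mat_def)
  finally show "(hconcat_mat m B2 B1 *\<^sub>v (v @\<^sub>v w)) $ i = (B2 *\<^sub>v v + B1 *\<^sub>v w) $ i"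
    using i B2 B1 v w by (simp add: scalar_prod_def atLeast0LessThan)
qed (use B2 B1 in \<open>simp add: hconcat_mat_def\<close>)

lemma quot_basis_hconcat:
  fixes B1 B2 :: "'a::field mat"
  assumes W: "is_subspace m W" and X: "is_subspace m X" and UX: "U \<subseteq> X" and XW: "X \<subseteq> W"
    and b1: "quot_basis m W X r1 B1" and b2: "quot_basis m X U r2 B2"
  shows "quot_basis m W U (r2 + r1) (hconcat_mat m B2 B1)"
proof -
  have B1: "B1 \<in> carrier_mat m r1" and B1W: "\<forall>a\<in>carrier_vec r1. B1 *\<^sub>v a \<in> W"
    and span1: "\<forall>w\<in>W. \<exists>a\<in>carrier_vec r1. w - B1 *\<^sub>v a \<in> X"
    and inj1: "\<forall>a\<in>carrier_vec r1. B1 *\<^sub>v a \<in> X \<longrightarrow> a = 0\<^sub>v r1"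
    using b1 unfolding quot_basis_def quot_independent_def by auto
  have B2: "B2 \<in> carrier_mat m r2" and B2X: "\<forall>a\<in>carrier_vec r2. B2 *\<^sub>v a \<in> X"
    and span2: "\<forall>w\<in>X. \<exists>a\<in>carrier_vec r2. w - B2 *\<^sub>v a \<in> U"
    and inj2: "\<forall>a\<in>carrier_vec r2. B2 *\<^sub>v a \<in> U \<longrightarrow> a = 0\<^sub>v r2"
    using b2 unfolding quot_basis_def quot_independent_def by auto
  let ?B = "hconcat_mat m B2 B1"
  have Bapp: "?B *\<^sub>v (v @\<^sub>v w) = B2 *\<^sub>v v + B1 *\<^sub>v w" if "v \<in> carrier_vec r2" "w \<in> carrier_vec r1"
    for v w
    by (rule hconcat_mat_mult_vec[OF B2 B1 that])
  show ?thesis unfolding quot_basis_def quot_independent_def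
  proof (intro conjI ballI impI)
    show "?B \<in> carrier_mat m (r2 + r1)" by (rule hconcat_mat_carrier[OF B2 B1])
  next
    fix a :: "'a vec" assume "a \<in> carrier_vec (r2 + r1)"
    then obtain a2 a1 where a2: "a2 \<in> carrier_vec r2" and a1: "a1 \<in> carrier_vec r1"
      and a: "a = a2 @\<^sub>v a1"
      by (rule carrier_vec_add_cases)
    show "?B *\<^sub>v a \<in> W" unfolding a Bapp[OF a2 a1]
      using is_subspaceD(3)[OF W] B2X a2 XW B1W a1 by blast
  next
    fix w assume w: "w \<in> W"
    obtain a1 where a1: "a1 \<in> carrier_vec r1" and wx: "w - B1 *\<^sub>v a1 \<in> X" using span1 w by blast
    obtain a2 where a2: "a2 \<in> carrier_vec r2" and wu: "(w - B1 *\<^sub>v a1) - B2 *\<^sub>v a2 \<in> U"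
      using span2 wx by blast
    have "w - ?B *\<^sub>v (a2 @\<^sub>v a1) = (w - B1 *\<^sub>v a1) - B2 *\<^sub>v a2"
      unfolding Bapp[OF a2 a1] using w is_subspaceD(1)[OF W] B1 B2 a1 a2 by (intro eq_vecI) auto
    thus "\<exists>a\<in>carrier_vec (r2 + r1). w - ?B *\<^sub>v a \<in> U" using wu a1 a2 by (metis append_carrier_vec)
  next
    fix a :: "'a vec" assume "a \<in> carrier_vec (r2 + r1)" and inU: "?B *\<^sub>v a \<in> U"
    then obtain a2 a1 where a2: "a2 \<in> carrier_vec r2" and a1: "a1 \<in> carrier_vec r1"
      and a: "a = a2 @\<^sub>v a1"
      by (metis carrier_vec_add_cases)
    have "B1 *\<^sub>v a1 = ?B *\<^sub>v a - B2 *\<^sub>v a2"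
      unfolding a Bapp[OF a2 a1] using B1 B2 a1 a2 by (intro eq_vecI) auto
    hence "B1 *\<^sub>v a1 \<in> X" using subspace_minus[OF X] inU UX B2X a2 by auto
    hence a10: "a1 = 0\<^sub>v r1" using inj1 a1 by simp
    hence "?B *\<^sub>v a = B2 *\<^sub>v a2" unfolding a Bapp[OF a2 a1] using B1 B2 a2 by simp
    hence "a2 = 0\<^sub>v r2" using inj2 a2 inU by simp
    thus "a = 0\<^sub>v (r2 + r1)" unfolding a a10 by (intro eq_vecI) auto
  qed
qed

text \<open>For a flag U \<subseteq> X \<subseteq> W, a representation of A on W/X, lifted to W and corrected by an
  off-diagonal block E, stacks with one on X/U into a block triangular representation on W/U.\<close>

lemma quot_trace_add:
  fixes A :: "'a::field mat"
  assumes g1: "invariant_pair m A W X" and g2: "invariant_pair m A X U"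
    and g: "invariant_pair m A W U"
  shows "quot_trace m A W U = quot_trace m A W X + quot_trace m A X U"
proof -
  have A: "A \<in> carrier_mat m m" and W: "is_subspace m W" and X: "is_subspace m X"
    and U: "is_subspace m U" and UX: "U \<subseteq> X" and XW: "X \<subseteq> W"
    using g1 g2 unfolding invariant_pair_def by auto
  obtain r1 B1 C1 where q1: "quot_rep m A W X r1 B1 C1" using quot_rep_exists[OF g1] by blast
  obtain r2 B2 C2 where q2: "quot_rep m A X U r2 B2 C2" using quot_rep_exists[OF g2] by blast
  note B1 = quot_repD(1)[OF q1] and C1 = quot_repD(2)[OF q1]
    and B2 = quot_repD(1)[OF q2] and C2 = quot_repD(2)[OF q2]
  let ?G = "A * B1 - B1 * C1"
  have Gc: "?G \<in> carrier_mat m r1" using A B1 C1 by auto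
  have Gv: "?G *\<^sub>v a = A *\<^sub>v (B1 *\<^sub>v a) - B1 *\<^sub>v (C1 *\<^sub>v a)" if "a \<in> carrier_vec r1" for a
    using A B1 C1 that by (simp add: minus_mult_distrib_mat_vec[of _ m r1])
  have "\<exists>a'\<in>carrier_vec r2. ?G *\<^sub>v unit_vec r1 j - B2 *\<^sub>v a' \<in> U" for j
    using Gv[of "unit_vec r1 j"] quot_repD(4,6)[OF q2] quot_repD(6)[OF q1] by simp
  then obtain E where E: "E \<in> carrier_mat r2 r1"
    and GE: "\<forall>a\<in>carrier_vec r1. ?G *\<^sub>v a - B2 *\<^sub>v (E *\<^sub>v a) \<in> U"
    using lift_mod_subspace[OF U Gc B2] by blast
  define B where "B = hconcat_mat m B2 B1"
  define C where "C = four_block_mat C2 E (0\<^sub>m r1 r2) C1"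
  have Bc: "B \<in> carrier_mat m (r2 + r1)" unfolding B_def by (rule hconcat_mat_carrier[OF B2 B1])
  have Cc: "C \<in> carrier_mat (r2 + r1) (r2 + r1)" unfolding C_def using C2 C1 by auto
  have "A *\<^sub>v (B *\<^sub>v a) - B *\<^sub>v (C *\<^sub>v a) \<in> U" if a_in: "a \<in> carrier_vec (r2 + r1)" for a
  proof -
    obtain a2 a1 where a2: "a2 \<in> carrier_vec r2" and a1: "a1 \<in> carrier_vec r1" and a: "a = a2 @\<^sub>v a1"
      using carrier_vec_add_cases[OF a_in] .
    have "C *\<^sub>v a = (C2 *\<^sub>v a2 + E *\<^sub>v a1) @\<^sub>v (C1 *\<^sub>v a1)"
      unfolding a C_def using four_block_mat_mult_vec[OF C2 E _ C1 a2 a1] a2 a1 C1 by simp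
    hence "A *\<^sub>v (B *\<^sub>v a) - B *\<^sub>v (C *\<^sub>v a) =
        (A *\<^sub>v (B2 *\<^sub>v a2) - B2 *\<^sub>v (C2 *\<^sub>v a2)) + (?G *\<^sub>v a1 - B2 *\<^sub>v (E *\<^sub>v a1))"
      unfolding B_def a hconcat_mat_mult_vec[OF B2 B1 a2 a1] Gv[OF a1]
      using hconcat_mat_mult_vec[OF B2 B1, of "C2 *\<^sub>v a2 + E *\<^sub>v a1" "C1 *\<^sub>v a1"] A B1 B2 C1 C2 E a1 a2
      by (intro eq_vecI) (auto simp: mult_add_distrib_mat_vec)
    thus ?thesis using is_subspaceD(3)[OF U quot_repD(6)[OF q2 a2]] GE a1 by simp
  qed
  hence q: "quot_rep m A W U (r2 + r1) B C"
    unfolding quot_rep_def B_def using quot_basis_hconcat[OF W X UX XW] q1 q2 Cc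
    unfolding quot_rep_def by (simp add: B_def)
  have "mat_trace C = (\<Sum>i<r2. C $$ (i,i)) + (\<Sum>i<r1. C $$ (r2 + i, r2 + i))"
    using Cc by (simp add: mat_trace_def sum_lessThan_add)
  also have "\<dots> = mat_trace C2 + mat_trace C1" using C2 C1 E by (simp add: C_def mat_trace_def)
  finally show ?thesis
    using quot_trace_eqI[OF g q] quot_trace_eqI[OF g1 q1] quot_trace_eqI[OF g2 q2] by simp
qed

lemma quot_trace_kernel_image:
  fixes A A' D :: "'a::field mat"
  assumes A: "A \<in> carrier_mat m m" and A': "A' \<in> carrier_mat m' m'" and D: "D \<in> carrier_mat m' m"
    and comm: "A' * D = D * A"
    and g: "invariant_pair m A (carrier_vec m) {v \<in> carrier_vec m. D *\<^sub>v v = 0\<^sub>v m'}"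
    and g': "invariant_pair m' A' {D *\<^sub>v w | w. w \<in> carrier_vec m} {0\<^sub>v m'}"
  shows "quot_trace m A (carrier_vec m) {v \<in> carrier_vec m. D *\<^sub>v v = 0\<^sub>v m'} =
         quot_trace m' A' {D *\<^sub>v w | w. w \<in> carrier_vec m} {0\<^sub>v m'}"
proof -
  let ?K = "{v \<in> carrier_vec m. D *\<^sub>v v = 0\<^sub>v m'}"
  obtain r B C where q: "quot_rep m A (carrier_vec m) ?K r B C" using quot_rep_exists[OF g] by blast
  note B = quot_repD(1)[OF q] and C = quot_repD(2)[OF q]
  have DB: "(D * B) *\<^sub>v a = D *\<^sub>v (B *\<^sub>v a)" if "a \<in> carrier_vec r" for a
    by (rule assoc_mult_mat_vec[OF D B that])
  have "quot_rep m' A' {D *\<^sub>v w | w. w \<in> carrier_vec m} {0\<^sub>v m'} r (D * B) C"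
    unfolding quot_rep_def quot_basis_def quot_independent_def
  proof (intro conjI ballI impI C)
    show "D * B \<in> carrier_mat m' r" using D B by simp
  next
    fix a :: "'a vec" assume a: "a \<in> carrier_vec r"
    show "(D * B) *\<^sub>v a \<in> {D *\<^sub>v w | w. w \<in> carrier_vec m}" using DB[OF a] B a by auto
  next
    fix w' assume "w' \<in> {D *\<^sub>v w | w. w \<in> carrier_vec m}"
    then obtain v where v: "v \<in> carrier_vec m" and w': "w' = D *\<^sub>v v" by blast
    obtain a where a: "a \<in> carrier_vec r" and k: "v - B *\<^sub>v a \<in> ?K"
      using quot_repD(4)[OF q v] by blast
    have "D *\<^sub>v (v - B *\<^sub>v a) = D *\<^sub>v v - D *\<^sub>v (B *\<^sub>v a)"
      by (rule mult_minus_distrib_mat_vec[OF D]) (use v B a in auto)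
    hence "w' - (D * B) *\<^sub>v a = 0\<^sub>v m'" using k DB[OF a] w' by simp
    thus "\<exists>a\<in>carrier_vec r. w' - (D * B) *\<^sub>v a \<in> {0\<^sub>v m'}" using a by auto
  next
    fix a :: "'a vec" assume a: "a \<in> carrier_vec r" and "(D * B) *\<^sub>v a \<in> {0\<^sub>v m'}"
    hence "B *\<^sub>v a \<in> ?K" using DB[OF a] B by auto
    thus "a = 0\<^sub>v r" using quot_repD(5)[OF q a] by simp
  next
    fix a :: "'a vec" assume a: "a \<in> carrier_vec r"
    have "A' *\<^sub>v ((D * B) *\<^sub>v a) - (D * B) *\<^sub>v (C *\<^sub>v a) = D *\<^sub>v (A *\<^sub>v (B *\<^sub>v a)) - D *\<^sub>v (B *\<^sub>v (C *\<^sub>v a))"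
      using DB[OF a] DB[of "C *\<^sub>v a"] assoc_mult_mat_vec[OF A' D, of "B *\<^sub>v a"]
        assoc_mult_mat_vec[OF D A, of "B *\<^sub>v a"] comm A' D A B C a by simp
    also have "\<dots> = D *\<^sub>v (A *\<^sub>v (B *\<^sub>v a) - B *\<^sub>v (C *\<^sub>v a))"
      by (rule mult_minus_distrib_mat_vec[symmetric, OF D]) (use A B C a in auto)
    also have "\<dots> = 0\<^sub>v m'" using quot_repD(6)[OF q a] by auto
    finally show "A' *\<^sub>v ((D * B) *\<^sub>v a) - (D * B) *\<^sub>v (C *\<^sub>v a) \<in> {0\<^sub>v m'}" by simp
  qed
  thus ?thesis using quot_trace_eqI[OF g q] quot_trace_eqI[OF g'] by simp
qed

lemma quot_trace_full:
  fixes A :: "'a::field mat"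
  assumes g: "invariant_pair m A (carrier_vec m) {0\<^sub>v m}"
  shows "quot_trace m A (carrier_vec m) {0\<^sub>v m} = mat_trace A"
proof -
  have A: "A \<in> carrier_mat m m" using g unfolding invariant_pair_def by auto
  have "quot_rep m A (carrier_vec m) {0\<^sub>v m} m (1\<^sub>m m) A"
    unfolding quot_rep_def quot_basis_def quot_independent_def
  proof (intro conjI ballI impI)
    fix w :: "'a vec" assume w: "w \<in> carrier_vec m"
    show "\<exists>a\<in>carrier_vec m. w - 1\<^sub>m m *\<^sub>v a \<in> {0\<^sub>v m}" using w by (intro bexI[of _ w]) auto
  qed (use A in auto)
  thus ?thesis by (rule quot_trace_eqI[OF g])
qed

lemma quot_trace_self:
  fixes A :: "'a::field mat"
  assumes g: "invariant_pair m A W W"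
  shows "quot_trace m A W W = 0"
proof -
  have W: "is_subspace m W" and A: "A \<in> carrier_mat m m"
    using g unfolding invariant_pair_def by auto
  have "quot_rep m A W W 0 (0\<^sub>m m 0) (0\<^sub>m 0 0)"
    unfolding quot_rep_def quot_basis_def quot_independent_def
    using is_subspaceD(1,2)[OF W] A by (auto intro!: exI[of _ "0\<^sub>v 0"])
  from quot_trace_eqI[OF g this] show ?thesis by (simp add: mat_trace_def)
qed

section \<open>Complexes, stretches and null-homotopies\<close>

lemma is_complexD:
  assumes "is_complex n d"
  shows "d i \<in> carrier_mat (n (i + 1)) (n i)" "d (i - 1) \<in> carrier_mat (n i) (n (i - 1))"
    "d (i + 1) * d i = 0\<^sub>m (n (i + 2)) (n i)" "d i * d (i - 1) = 0\<^sub>m (n (i + 1)) (n (i - 1))"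
proof -
  show "d i \<in> carrier_mat (n (i + 1)) (n i)" "d (i + 1) * d i = 0\<^sub>m (n (i + 2)) (n i)"
    using assms unfolding is_complex_def by blast+
  show "d (i - 1) \<in> carrier_mat (n i) (n (i - 1))"
    using assms unfolding is_complex_def by (metis diff_add_cancel)
  have "d (i - 1 + 1) * d (i - 1) = 0\<^sub>m (n (i - 1 + 2)) (n (i - 1))"
    using assms unfolding is_complex_def by blast
  thus "d i * d (i - 1) = 0\<^sub>m (n (i + 1)) (n (i - 1))" by (simp add: algebra_simps)
qed

lemma is_chain_mapD:
  assumes "is_chain_map n d f"
  shows "f i \<in> carrier_mat (n i) (n i)" "f (i + 1) * d i = d i * f i"
  using assms unfolding is_chain_map_def by blast+

lemma mat_trace_null_homotopy:
  assumes "is_complex n d" and h: "\<And>i. h i \<in> carrier_mat (n (i - 1)) (n i)"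
  shows "mat_trace (d (i - 1) * h i + h (i + 1) * d i)
    = mat_trace (h i * d (i - 1)) + mat_trace (h (i + 1) * d i)"
proof -
  note d = is_complexD(1,2)[OF assms(1)]
  have "h (i + 1) \<in> carrier_mat (n i) (n (i + 1))" using h[of "i + 1"] by simp
  thus ?thesis
    using mat_trace_add[of "d (i - 1) * h i" "n i" "h (i + 1) * d i"]
      mat_trace_mult_comm[of "d (i - 1)" "n i" "n (i - 1)" "h i"] d[of i] h[of i] by simp
qed

lemma chain_map_minus_null_homotopy:
  assumes cx: "is_complex n d" and cm: "is_chain_map n d f"
    and h: "\<And>i. h i \<in> carrier_mat (n (i - 1)) (n i)"
  shows "is_chain_map n d (\<lambda>i. f i - (d (i - 1) * h i + h (i + 1) * d i))"
  unfolding is_chain_map_def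
proof (intro conjI allI)
  fix i
  have D: "d i \<in> carrier_mat (n (i + 1)) (n i)" and D': "d (i - 1) \<in> carrier_mat (n i) (n (i - 1))"
    and D2: "d (i + 1) \<in> carrier_mat (n (i + 2)) (n (i + 1))"
    using is_complexD(1,2)[OF cx, of i] is_complexD(1)[OF cx, of "i + 1"]
      by (simp_all add: add.assoc)
  have H: "h (i + 1) \<in> carrier_mat (n i) (n (i + 1))" and H': "h i \<in> carrier_mat (n (i - 1)) (n i)"
    and H2: "h (i + 2) \<in> carrier_mat (n (i + 1)) (n (i + 2))"
    using h[of "i + 1"] h[of i] h[of "i + 2"] by (simp_all add: add.commute)
  note F = is_chain_mapD(1)[OF cm] and dd = is_complexD(3,4)[OF cx, of i]
  show "f i - (d (i - 1) * h i + h (i + 1) * d i) \<in> carrier_mat (n i) (n i)"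
    using F[of i] D D' H H' by auto
  \<comment> \<open>Both sides reduce to f (i+1) d - d h d, because d d = 0.\<close>
  let ?D = "d i" and ?D' = "d (i - 1)" and ?D2 = "d (i + 1)"
  let ?H = "h (i + 1)" and ?H' = "h i" and ?H2 = "h (i + 2)"
  have "(f (i + 1) - (?D * ?H + ?H2 * ?D2)) * ?D = f (i + 1) * ?D - (?D * ?H + ?H2 * ?D2) * ?D"
    by (rule minus_mult_distrib_mat[OF F[of "i + 1"] _ D]) (use D H H2 D2 in auto)
  also have "(?D * ?H + ?H2 * ?D2) * ?D = (?D * ?H) * ?D + ?H2 * (?D2 * ?D)"
    using add_mult_distrib_mat[OF _ _ D, of "?D * ?H" "n (i + 1)" "?H2 * ?D2"]
      assoc_mult_mat[OF H2 D2 D]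
      D H H2 D2 by simp
  also have "\<dots> = ?D * (?H * ?D)" using dd(1) D H H2 by simp
  finally have left: "(f (i + 1) - (?D * ?H + ?H2 * ?D2)) * ?D = f (i + 1) * ?D - ?D * (?H * ?D)" .
  have "?D * (f i - (?D' * ?H' + ?H * ?D)) = ?D * f i - ?D * (?D' * ?H' + ?H * ?D)"
    by (rule mult_minus_distrib_mat[OF D F[of i]]) (use D' H' H D in auto)
  also have "?D * (?D' * ?H' + ?H * ?D) = (?D * ?D') * ?H' + ?D * (?H * ?D)"
    using mult_add_distrib_mat[OF D, of "?D' * ?H'" "n i" "?H * ?D"] assoc_mult_mat[OF D D' H']
      D D' H H' by simp
  also have "\<dots> = ?D * (?H * ?D)" using dd(2) D H H' by simp
  finally have right: "?D * (f i - (?D' * ?H' + ?H * ?D)) = ?D * f i - ?D * (?H * ?D)" .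
  show "(f (i + 1) - (d (i + 1 - 1) * h (i + 1) + h (i + 1 + 1) * d (i + 1))) * d i
      = d i * (f i - (d (i - 1) * h i + h (i + 1) * d i))"
    using left right is_chain_mapD(2)[OF cm, of i] by (simp add: add.assoc)
qed

lemma is_stretch_boundary:
  assumes "is_stretch n d M N"
  shows "d (M - 1) = 0\<^sub>m (n M) (n (M - 1))" "d N = 0\<^sub>m (n (N + 1)) (n N)"
proof -
  from assms have MN: "M \<le> N" and nz: "nonzero_on n d {M..N}"
    and max: "\<And>M' N'. M' \<le> N' \<Longrightarrow> {M..N} \<subseteq> {M'..N'} \<Longrightarrow> nonzero_on n d {M'..N'} \<Longrightarrow> {M'..N'} = {M..N}"
    unfolding is_stretch_def by blast+
  \<comment> \<open>Otherwise the stretch would extend by one step to the left or to the right.\<close>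
  have extend: "nonzero_on n d {M'..N'}"
    if "d j \<noteq> 0\<^sub>m (n (j + 1)) (n j)" and "{M'..N'} = insert j {M..N} \<union> insert (j + 1) {M..N}"
      and "\<And>i. i \<in> {M'..N'} \<Longrightarrow> i + 1 \<in> {M'..N'} \<Longrightarrow> i = j \<or> i \<in> {M..N} \<and> i + 1 \<in> {M..N}"
    for j M' N'
    using that nz unfolding nonzero_on_def by blast
  show "d (M - 1) = 0\<^sub>m (n M) (n (M - 1))"
  proof (rule ccontr)
    assume "d (M - 1) \<noteq> 0\<^sub>m (n M) (n (M - 1))"
    hence "nonzero_on n d {M - 1..N}" by (intro extend[of "M - 1"]) (use MN in auto)
    thus False using max[of "M - 1" N] MN by auto
  qed
  show "d N = 0\<^sub>m (n (N + 1)) (n N)"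
  proof (rule ccontr)
    assume "d N \<noteq> 0\<^sub>m (n (N + 1)) (n N)"
    hence "nonzero_on n d {M..N + 1}" by (intro extend[of N]) (use MN in auto)
    thus False using max[of M "N + 1"] MN by auto
  qed
qed

lemma is_stretchI:
  assumes ab: "a < b" and da: "d a = 0\<^sub>m (n (a + 1)) (n a)" and db: "d b = 0\<^sub>m (n (b + 1)) (n b)"
    and mid: "\<And>i. a < i \<Longrightarrow> i < b \<Longrightarrow> d i \<noteq> 0\<^sub>m (n (i + 1)) (n i)"
  shows "is_stretch n d (a + 1) b"
  unfolding is_stretch_def
proof (intro conjI allI impI)
  show "a + 1 \<le> b" using ab by simp
  show "nonzero_on n d {a + 1..b}" unfolding nonzero_on_def using mid by auto
  fix M' N' assume h: "M' \<le> N' \<and> {a + 1..b} \<subseteq> {M'..N'} \<and> nonzero_on n d {M'..N'}"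
  hence "M' \<le> a + 1" "b \<le> N'" using ab by auto
  moreover have "a \<notin> {M'..N'} \<or> a + 1 \<notin> {M'..N'}" "b \<notin> {M'..N'} \<or> b + 1 \<notin> {M'..N'}"
    using h da db unfolding nonzero_on_def by blast+
  ultimately show "{M'..N'} = {a + 1..b}" using ab by auto
qed

lemma alternating_sum_telescope:
  fixes u :: "int \<Rightarrow> 'a::field"
  assumes "M \<le> N"
  shows "(\<Sum>i\<in>{M..N}. (-1) powi i * (u (i - 1) + u i)) = (-1) powi M * u (M - 1) + (-1) powi N * u N"
  using assms
proof (induction N rule: int_ge_induct)
  case (step N)
  have "{M..N + 1} = insert (N + 1) {M..N}" using step(1) by auto
  thus ?case using step(2) by (simp add: power_int_add algebra_simps)
qed (simp add: algebra_simps)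

theorem stretch_trace_zero_if_homotopic_commutator:
  fixes \<phi> \<psi> :: "int \<Rightarrow> 'k::field mat"
  assumes cx: "is_complex n d" and cm: "is_chain_map n d \<phi>"
    and cm': "is_chain_map n d \<psi>" and comm: "pointwise_commutator n \<psi>"
    and homot: "chain_homotopic n d \<phi> \<psi>" and st: "is_stretch n d M N"
  shows "(\<Sum>i\<in>{M..N}. (-1) powi i * mat_trace (\<phi> i)) = 0"
proof -
  obtain h where hc: "\<And>i. h i \<in> carrier_mat (n (i - 1)) (n i)"
    and he: "\<And>i. \<phi> i - \<psi> i = d (i - 1) * h i + h (i + 1) * d i"
    using homot unfolding chain_homotopic_def by blast
  define u where "u i = mat_trace (h (i + 1) * d i)" for i
  have tr: "mat_trace (\<phi> i) = u (i - 1) + u i" for i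
  proof -
    have "mat_trace (\<phi> i) - mat_trace (\<psi> i) = u (i - 1) + u i"
      using mat_trace_minus[OF is_chain_mapD(1)[OF cm, of i] is_chain_mapD(1)[OF cm', of i]]
        mat_trace_null_homotopy[OF cx hc, of i] he[of i] by (simp add: u_def)
    moreover have "mat_trace (\<psi> i) = 0"
      using is_commutator_mat_trace comm unfolding pointwise_commutator_def by blast
    ultimately show ?thesis by simp
  qed
  have "M \<le> N" using st unfolding is_stretch_def by simp
  hence "(\<Sum>i\<in>{M..N}. (-1) powi i * mat_trace (\<phi> i)) = (-1) powi M * u (M - 1) + (-1) powi N * u N"
    unfolding tr by (rule alternating_sum_telescope)
  moreover have "u (M - 1) = 0" "u N = 0"
    unfolding u_def using is_stretch_boundary[OF st] hc[of M] hc[of "N + 1"] by simp_all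
  ultimately show ?thesis by simp
qed

definition int_antidiff :: "(int \<Rightarrow> 'a::comm_ring_1) \<Rightarrow> int \<Rightarrow> 'a" where
  "int_antidiff T x = (\<Sum>j\<in>{0<..x}. T j) - (\<Sum>j\<in>{x<..0}. T j)"

lemma int_antidiff_diff: "int_antidiff T x - int_antidiff T (x - 1) = T x"
proof (cases "1 \<le> x")
  case True
  have "{0<..x} = insert x {0<..x - 1}" "{x<..0} = {}" "{x - 1<..0} = {}" using True by auto
  thus ?thesis unfolding int_antidiff_def by simp
next
  case False
  have "{0<..x} = {}" "{0<..x - 1} = {}" "{x - 1<..0} = insert x {x<..0}" using False by auto
  thus ?thesis unfolding int_antidiff_def by simp
qed

lemma sum_greaterThanAtMost_int_antidiff:
  assumes "a \<le> b"
  shows "(\<Sum>j\<in>{a<..b}. T j) = int_antidiff T b - int_antidiff T a"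
  using assms
proof (induction b rule: int_ge_induct)
  case (step b)
  have "{a<..b + 1} = insert (b + 1) {a<..b}" using step(1) by auto
  thus ?case using step(2) int_antidiff_diff[of T "b + 1"] by (simp add: algebra_simps)
qed simp

lemma eq_on_marked_if_eq_on_consecutive:
  fixes Z :: "int \<Rightarrow> bool"
  assumes step: "\<And>a b. a < b \<Longrightarrow> Z a \<Longrightarrow> Z b \<Longrightarrow> (\<And>i. a < i \<Longrightarrow> i < b \<Longrightarrow> \<not> Z i) \<Longrightarrow> F a = F b"
    and a: "Z a" and b: "Z b"
  shows "F a = F b"
proof -
  have "F a = F b" if "Z a" "Z b" "a \<le> b" for a b
    using that
  proof (induction "nat (b - a)" arbitrary: a b rule: less_induct)
    case less
    show ?case
    proof (cases "\<exists>z. a < z \<and> z < b \<and> Z z")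
      case True
      then obtain z where z: "a < z" "z < b" "Z z" by blast
      thus ?thesis
        using less.hyps[where a = z and b = b] less.hyps[where a = a and b = z] less.prems
        by force
    next
      case False
      thus ?thesis using step[of a b] less.prems by (cases "a = b") auto
    qed
  qed
  thus ?thesis using a b by (metis linear)
qed

lemma exists_mat_trace_mult_eq:
  fixes D :: "'a::field mat"
  assumes D: "D \<in> carrier_mat m' m" and zero: "D = 0\<^sub>m m' m \<Longrightarrow> c = 0"
  shows "\<exists>H\<in>carrier_mat m m'. mat_trace (H * D) = c"
proof (cases "D = 0\<^sub>m m' m")
  case True
  thus ?thesis using zero D by (intro bexI[of _ "0\<^sub>m m m'"]) auto
next
  case False
  then obtain p q where p: "p < m'" and q: "q < m" and Dpq: "D $$ (p,q) \<noteq> 0"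
    using D by (metis carrier_matD eq_matI index_zero_mat(1,2,3))
  \<comment> \<open>A single entry placed at the transposed position of a nonzero entry of D.\<close>
  define H where "H = mat m m' (\<lambda>(i,j). if i = q \<and> j = p then c / D $$ (p,q) else 0)"
  have "mat_trace (H * D) = (\<Sum>i<m. \<Sum>j<m'. H $$ (i,j) * D $$ (j,i))"
    using D by (simp add: H_def mat_trace_def scalar_prod_def atLeast0LessThan)
  also have "\<dots> = (\<Sum>i<m. if i = q then c / D $$ (p,q) * D $$ (p,i) else 0)"
  proof (intro sum.cong refl)
    fix i assume "i \<in> {..<m}"
    hence "(\<Sum>j<m'. H $$ (i,j) * D $$ (j,i))
        = (\<Sum>j<m'. if j = p then (if i = q then c / D $$ (p,q) * D $$ (j,i) else 0) else 0)"
      using p by (intro sum.cong) (auto simp: H_def)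
    thus "(\<Sum>j<m'. H $$ (i,j) * D $$ (j,i)) = (if i = q then c / D $$ (p,q) * D $$ (p,i) else 0)"
      using p by simp
  qed
  also have "\<dots> = c" using q Dpq by (simp add: sum.delta')
  finally show ?thesis by (intro bexI[of _ H]) (auto simp: H_def)
qed

text \<open>Let F be an antiderivative of the alternating traces. On each stretch F takes the same value
  at both ends, so F is constant, say K, on the degrees i with d_i = 0. The values
  u_i = (-1)^i (F_i - K) then satisfy u_(i-1) + u_i = tr \<phi>_i and vanish wherever d_i = 0; choosing
  h with tr(h_(i+1) d_i) = u_i makes \<phi> - (d h + h d) traceless in every degree.\<close>

theorem homotopic_commutator_if_stretch_trace_zero:
  fixes \<phi> :: "int \<Rightarrow> 'k::field mat"
  assumes cx: "is_complex n d" and cm: "is_chain_map n d \<phi>"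
    and stretch: "\<forall>M N. is_stretch n d M N \<longrightarrow> (\<Sum>i\<in>{M..N}. (-1) powi i * mat_trace (\<phi> i)) = 0"
  shows "\<exists>\<psi>. is_chain_map n d \<psi> \<and> pointwise_commutator n \<psi> \<and> chain_homotopic n d \<phi> \<psi>"
proof -
  let ?Z = "\<lambda>i. d i = 0\<^sub>m (n (i + 1)) (n i)"
  define F where "F = int_antidiff (\<lambda>j. (-1) powi j * mat_trace (\<phi> j))"
  have "F a = F b" if "?Z a" "?Z b" for a b
  proof (rule eq_on_marked_if_eq_on_consecutive[of ?Z, OF _ that])
    fix a b assume ab: "a < b" "?Z a" "?Z b" and mid: "\<And>i. a < i \<Longrightarrow> i < b \<Longrightarrow> \<not> ?Z i"
    have "is_stretch n d (a + 1) b" using is_stretchI[of a b d n] ab mid by blast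
    moreover have "{a + 1..b} = {a<..b}" by auto
    ultimately have "(\<Sum>j\<in>{a<..b}. (-1) powi j * mat_trace (\<phi> j)) = 0" using stretch by metis
    thus "F a = F b"
      using sum_greaterThanAtMost_int_antidiff[of a b "\<lambda>j. (-1) powi j * mat_trace (\<phi> j)"] ab
      by (simp add: F_def)
  qed
  then obtain K where K: "\<And>z. ?Z z \<Longrightarrow> F z = K" by metis
  define u where "u i = ((-1) powi i * (F i - K) :: 'k)" for i
  have u_sum: "u (i - 1) + u i = mat_trace (\<phi> i)" for i
    using int_antidiff_diff[of "\<lambda>j. (-1) powi j * mat_trace (\<phi> j)" i]
    by (simp add: u_def F_def power_int_diff algebra_simps)
  have "\<forall>j. \<exists>H\<in>carrier_mat (n (j - 1)) (n j). mat_trace (H * d (j - 1)) = u (j - 1)"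
    using exists_mat_trace_mult_eq[OF is_complexD(2)[OF cx]] K by (simp add: u_def)
  then obtain h where hc: "\<And>j. h j \<in> carrier_mat (n (j - 1)) (n j)"
    and htr: "\<And>j. mat_trace (h j * d (j - 1)) = u (j - 1)" by metis
  define \<psi> where "\<psi> i = \<phi> i - (d (i - 1) * h i + h (i + 1) * d i)" for i
  have chain: "is_chain_map n d \<psi>"
    unfolding \<psi>_def by (rule chain_map_minus_null_homotopy[OF cx cm hc])
  have "\<phi> i - \<psi> i = d (i - 1) * h i + h (i + 1) * d i" for i
    using is_chain_mapD(1)[OF cm, of i] is_complexD(1,2)[OF cx, of i] hc[of i] hc[of "i + 1"]
    unfolding \<psi>_def by (intro eq_matI) auto
  hence homot: "chain_homotopic n d \<phi> \<psi>" unfolding chain_homotopic_def using hc by blast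
  have "mat_trace (\<phi> i) - mat_trace (\<psi> i) = mat_trace (\<phi> i)" for i
    using mat_trace_minus[OF is_chain_mapD(1)[OF cm, of i] is_chain_mapD(1)[OF chain, of i]]
      \<open>\<phi> i - \<psi> i = _\<close> mat_trace_null_homotopy[OF cx hc, of i] htr[of i] htr[of "i + 1"] u_sum[of i]
    by simp
  hence "mat_trace (\<psi> i) = 0" for i by simp
  hence "pointwise_commutator n \<psi>"
    using traceless_is_commutator is_chain_mapD(1)[OF chain]
    unfolding pointwise_commutator_def by blast
  thus ?thesis using chain homot by blast
qed

section \<open>Traces on cohomology\<close>

lemma coboundaries_Suc: "coboundaries n d (i + 1) = {d i *\<^sub>v w | w. w \<in> carrier_vec (n i)}"
  by (simp add: coboundaries_def)

lemma coboundaries_subset_cocycles: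
  assumes "is_complex n d"
  shows "coboundaries n d i \<subseteq> cocycles n d i"
proof
  fix v assume "v \<in> coboundaries n d i"
  then obtain w where w: "w \<in> carrier_vec (n (i - 1))" and v: "v = d (i - 1) *\<^sub>v w"
    unfolding coboundaries_def by blast
  note D = is_complexD(1,2)[OF assms, of i]
  have "d i *\<^sub>v v = (d i * d (i - 1)) *\<^sub>v w" unfolding v using D w by simp
  thus "v \<in> cocycles n d i" unfolding cocycles_def v
    using is_complexD(4)[OF assms, of i] D w by simp
qed

lemma chain_map_invariant_pairs:
  assumes cx: "is_complex n d" and cm: "is_chain_map n d f"
  shows "invariant_pair (n i) (f i) (carrier_vec (n i)) {0\<^sub>v (n i)}"
    and "invariant_pair (n i) (f i) (carrier_vec (n i)) (cocycles n d i)"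
    and "invariant_pair (n i) (f i) (cocycles n d i) {0\<^sub>v (n i)}"
    and "invariant_pair (n i) (f i) (cocycles n d i) (coboundaries n d i)"
    and "invariant_pair (n i) (f i) (coboundaries n d i) {0\<^sub>v (n i)}"
proof -
  note D = is_complexD(1,2)[OF cx, of i] and F = is_chain_mapD(1)[OF cm]
  have Z: "is_subspace (n i) (cocycles n d i)"
    unfolding cocycles_def by (rule subspace_kernel[OF D(1)])
  have B: "is_subspace (n i) (coboundaries n d i)"
    unfolding coboundaries_def by (rule subspace_image[OF D(2)])
  have fZ: "f i *\<^sub>v v \<in> cocycles n d i" if "v \<in> cocycles n d i" for v
  proof -
    have v: "v \<in> carrier_vec (n i)" "d i *\<^sub>v v = 0\<^sub>v (n (i + 1))"
      using that unfolding cocycles_def by auto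
    have "d i *\<^sub>v (f i *\<^sub>v v) = f (i + 1) *\<^sub>v (d i *\<^sub>v v)"
      using is_chain_mapD(2)[OF cm, of i] D F[of i] F[of "i + 1"] v
      by (metis assoc_mult_mat_vec)
    thus ?thesis unfolding cocycles_def using v F[of i] F[of "i + 1"] by simp
  qed
  have fB: "f i *\<^sub>v v \<in> coboundaries n d i" if vB: "v \<in> coboundaries n d i" for v
  proof -
    obtain w where w: "w \<in> carrier_vec (n (i - 1))" and v: "v = d (i - 1) *\<^sub>v w"
      using vB unfolding coboundaries_def by blast
    have "f i *\<^sub>v v = d (i - 1) *\<^sub>v (f (i - 1) *\<^sub>v w)"
      using is_chain_mapD(2)[OF cm, of "i - 1"] D F[of i] F[of "i - 1"] w unfolding v
      by (metis assoc_mult_mat_vec diff_add_cancel)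
    thus ?thesis unfolding coboundaries_def using F[of "i - 1"] w by auto
  qed
  have "{0\<^sub>v (n i)} \<subseteq> coboundaries n d i" using is_subspaceD(2)[OF B] by simp
  moreover have "cocycles n d i \<subseteq> carrier_vec (n i)" unfolding cocycles_def by auto
  ultimately show "invariant_pair (n i) (f i) (carrier_vec (n i)) {0\<^sub>v (n i)}"
    "invariant_pair (n i) (f i) (carrier_vec (n i)) (cocycles n d i)"
    "invariant_pair (n i) (f i) (cocycles n d i) {0\<^sub>v (n i)}"
    "invariant_pair (n i) (f i) (cocycles n d i) (coboundaries n d i)"
    "invariant_pair (n i) (f i) (coboundaries n d i) {0\<^sub>v (n i)}"
    unfolding invariant_pair_def using F[of i] Z B subspace_carrier_vec subspace_zero fZ fB
      coboundaries_subset_cocycles[OF cx, of i] by auto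
qed

definition coboundary_trace ::
  "(int \<Rightarrow> nat) \<Rightarrow> (int \<Rightarrow> 'k::field mat) \<Rightarrow> (int \<Rightarrow> 'k mat) \<Rightarrow> int \<Rightarrow> 'k" where
  "coboundary_trace n d f i = quot_trace (n i) (f i) (coboundaries n d i) {0\<^sub>v (n i)}"

lemma mat_trace_chain_map_eq:
  assumes cx: "is_complex n d" and cm: "is_chain_map n d f"
  shows "mat_trace (f i) = homology_trace n d f i + coboundary_trace n d f i
      + coboundary_trace n d f (i + 1)"
proof -
  note inv = chain_map_invariant_pairs[OF cx cm]
  have "mat_trace (f i) = quot_trace (n i) (f i) (carrier_vec (n i)) {0\<^sub>v (n i)}"
    by (rule quot_trace_full[OF inv(1), symmetric])
  also have "\<dots> = quot_trace (n i) (f i) (carrier_vec (n i)) (cocycles n d i)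
      + quot_trace (n i) (f i) (cocycles n d i) {0\<^sub>v (n i)}"
    by (rule quot_trace_add[OF inv(2) inv(3) inv(1)])
  also have "quot_trace (n i) (f i) (cocycles n d i) {0\<^sub>v (n i)}
      = homology_trace n d f i + coboundary_trace n d f i"
    unfolding homology_trace_def coboundary_trace_def
      by (rule quot_trace_add[OF inv(4) inv(5) inv(3)])
  also have "quot_trace (n i) (f i) (carrier_vec (n i)) (cocycles n d i)
      = coboundary_trace n d f (i + 1)"
    unfolding cocycles_def coboundary_trace_def coboundaries_Suc
    by (rule quot_trace_kernel_image[OF is_chain_mapD(1)[OF cm] is_chain_mapD(1)[OF cm]
          is_complexD(1)[OF cx] is_chain_mapD(2)[OF cm]])
      (use inv(2)[of i] inv(5)[of "i + 1"] in \<open>simp_all add: cocycles_def coboundaries_Suc\<close>)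
  finally show ?thesis by (simp add: algebra_simps)
qed

lemma stretch_trace_eq_homology_trace:
  assumes cx: "is_complex n d" and cm: "is_chain_map n d f" and st: "is_stretch n d M N"
  shows "(\<Sum>i\<in>{M..N}. (-1) powi i * mat_trace (f i))
      = (\<Sum>i\<in>{M..N}. (-1) powi i * homology_trace n d f i)"
proof -
  let ?\<beta> = "coboundary_trace n d f"
  have zero: "?\<beta> j = 0" if dz: "d (j - 1) = 0\<^sub>m (n j) (n (j - 1))" for j
  proof -
    have "coboundaries n d j = {0\<^sub>v (n j)}"
      unfolding coboundaries_def dz by (auto intro!: exI[of _ "0\<^sub>v (n (j - 1))"])
    thus ?thesis
      using quot_trace_self chain_map_invariant_pairs(5)[OF cx cm, of j]
      unfolding coboundary_trace_def by metis
  qed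
  have "M \<le> N" using st unfolding is_stretch_def by simp
  hence "(\<Sum>i\<in>{M..N}. (-1) powi i * (?\<beta> (i - 1 + 1) + ?\<beta> (i + 1)))
      = (-1) powi M * ?\<beta> (M - 1 + 1) + (-1) powi N * ?\<beta> (N + 1)"
    by (rule alternating_sum_telescope)
  also have "\<dots> = 0" using zero[of M] zero[of "N + 1"] is_stretch_boundary[OF st] by simp
  finally have "(\<Sum>i\<in>{M..N}. (-1) powi i * (?\<beta> i + ?\<beta> (i + 1))) = 0" by simp
  thus ?thesis
    using mat_trace_chain_map_eq[OF cx cm]
    by (simp add: distrib_left sum.distrib)
qed

theorem theorem4:
  fixes n :: "int \<Rightarrow> nat" and d \<phi> :: "int \<Rightarrow> 'k::field mat"
  assumes "is_complex n d"
    and "is_chain_map n d \<phi>"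
  shows "((\<exists>\<psi>. is_chain_map n d \<psi> \<and> pointwise_commutator n \<psi> \<and> chain_homotopic n d \<phi> \<psi>)
           \<longleftrightarrow> (\<forall>M N. is_stretch n d M N \<longrightarrow>
                   (\<Sum>i\<in>{M..N}. (-1) powi i * mat_trace (\<phi> i)) = 0))
       \<and> ((\<forall>M N. is_stretch n d M N \<longrightarrow>
                   (\<Sum>i\<in>{M..N}. (-1) powi i * mat_trace (\<phi> i)) = 0)
           \<longleftrightarrow> (\<forall>M N. is_stretch n d M N \<longrightarrow>
                   (\<Sum>i\<in>{M..N}. (-1) powi i * homology_trace n d \<phi> i) = 0))"
proof (intro conjI)
  show "(\<exists>\<psi>. is_chain_map n d \<psi> \<and> pointwise_commutator n \<psi> \<and> chain_homotopic n d \<phi> \<psi>)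
    \<longleftrightarrow> (\<forall>M N. is_stretch n d M N \<longrightarrow> (\<Sum>i\<in>{M..N}. (-1) powi i * mat_trace (\<phi> i)) = 0)"
    using stretch_trace_zero_if_homotopic_commutator[OF assms]
      homotopic_commutator_if_stretch_trace_zero[OF assms] by blast
  show "(\<forall>M N. is_stretch n d M N \<longrightarrow> (\<Sum>i\<in>{M..N}. (-1) powi i * mat_trace (\<phi> i)) = 0)
    \<longleftrightarrow> (\<forall>M N. is_stretch n d M N \<longrightarrow> (\<Sum>i\<in>{M..N}. (-1) powi i * homology_trace n d \<phi> i) = 0)"
    using stretch_trace_eq_homology_trace[OF assms] by simp
qed

end
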